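(* In the one-state softmax setting of the context, run the update $\theta_{t+1} = \theta_t + \eta_t(\hat r_t - \hat b_t)$ with on-policy sampling $a_t\sim\pi_{\theta_t}(\cdot)$, either (i) with $\hat r_t(a) = \frac{\mathbb{I}\{a_t=a\}}{\pi_{\theta_t}(a)} r(a)$ and constant $\eta_t=\eta>0$, or (ii) with $\hat r_t(a) = \frac{\mathbb{I}\{a_t=a\}}{\pi_{\theta_t}(a)}x_t(a)$ and $\eta_t = \frac{\pi_{\theta_t}(a_t)|r(a_t)-\pi_{\theta_t}^\top r|}{8R_{\max}^2}$. Then the sequence $(\pi_{\theta_t}^\top r)_{t\ge 1}$ converges with probability one.
   Context: Let $K\ge2$, $r\in[0,1]^K$, softmax policy $\pi_\theta(a) = e^{\theta(a)}/\sum_{a'}e^{\theta(a')}$. For each action $a$, $R_a$ is a reward distribution supported on $[-R_{\max},R_{\max}]$ ($R_{\max}>0$) with mean $r(a)$. At iteration $t$, $a_t\sim\pi_{\theta_t}(\cdot)$; in case (ii) a reward $x_t(a_t)\sim R_{a_t}$ is observed and $x_t(a):=0$ for $a\ne a_t$. The baseline vector is $\hat b_t(a) = \left(\frac{\mathbb{I}\{a_t=a\}}{\pi_{\theta_t}(a)} - 1\right)\pi_{\theta_t}^\top r$. *)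

theory Defs
  imports "HOL-Probability.Probability"
begin

definition softmax :: "('a::finite \<Rightarrow> real) \<Rightarrow> 'a \<Rightarrow> real" where
  "softmax \<theta> a = exp (\<theta> a) / (\<Sum>a'\<in>UNIV. exp (\<theta> a'))"

definition exp_reward :: "('a::finite \<Rightarrow> real) \<Rightarrow> ('a \<Rightarrow> real) \<Rightarrow> real" where
  "exp_reward \<pi> r = (\<Sum>a\<in>UNIV. \<pi> a * r a)"

definition baseline :: "('a::finite \<Rightarrow> real) \<Rightarrow> ('a \<Rightarrow> real) \<Rightarrow> 'a \<Rightarrow> 'a \<Rightarrow> real" where
  "baseline \<theta> r a\<^sub>t a =
     ((if a\<^sub>t = a then 1 else 0) / softmax \<theta> a - 1) * exp_reward (softmax \<theta>) r"

definition rhat_true :: "('a::finite \<Rightarrow> real) \<Rightarrow> ('a \<Rightarrow> real) \<Rightarrow> 'a \<Rightarrow> 'a \<Rightarrow> real" where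
  "rhat_true \<theta> r a\<^sub>t a = (if a\<^sub>t = a then 1 else 0) / softmax \<theta> a * r a"

text \<open>Case (ii) estimator: hat r_t(a) = I{a_t = a}/pi(a) * x_t(a), where x_t(a_t) = x
  is the observed reward and x_t(a) = 0 for a different from a_t.\<close>
definition rhat_obs :: "('a::finite \<Rightarrow> real) \<Rightarrow> real \<Rightarrow> 'a \<Rightarrow> 'a \<Rightarrow> real" where
  "rhat_obs \<theta> x a\<^sub>t a = (if a\<^sub>t = a then 1 else 0) / softmax \<theta> a * (if a\<^sub>t = a then x else 0)"

definition eta_obs :: "('a::finite \<Rightarrow> real) \<Rightarrow> ('a \<Rightarrow> real) \<Rightarrow> real \<Rightarrow> 'a \<Rightarrow> real" where
  "eta_obs \<theta> r Rmax a\<^sub>t =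
     softmax \<theta> a\<^sub>t * \<bar>r a\<^sub>t - exp_reward (softmax \<theta>) r\<bar> / (8 * Rmax\<^sup>2)"

end

theory Submission
  imports Defs
begin

text \<open>
  Let \<open>V\<^sub>t\<close> be the expected reward of the current policy. Both updates raise the logit of the
  sampled action \<open>a\<^sub>t\<close> by some \<open>\<Delta>\<close> relative to the other logits (the baseline shifts all
  logits equally), and this changes \<open>V\<close> by \<open>p (e\<^sup>\<Delta> - 1) / (1 + p (e\<^sup>\<Delta> - 1)) \<cdot> (r(a\<^sub>t) - V)\<close>,
  where \<open>p = \<pi>\<^sub>t(a\<^sub>t)\<close>.

  In case (i), \<open>\<Delta>\<close> has the sign of \<open>r(a\<^sub>t) - V\<close>, so \<open>V\<^sub>t\<close> is nondecreasing and bounded by 1.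

  In case (ii), \<open>\<Delta> = |r(a\<^sub>t) - V| (x - V) / (8 R\<^sub>m\<^sub>a\<^sub>x\<^sup>2)\<close> lies in \<open>[-1, 1]\<close>, where
  \<open>e\<^sup>y \<le> 1 + y + y\<^sup>2\<close> holds. Hence the increment of \<open>V\<close> dominates a quadratic polynomial in the
  observed reward \<open>x\<close> whose conditional expectation is \<open>p |r(a\<^sub>t) - V|\<^sup>3 / (16 R\<^sub>m\<^sub>a\<^sub>x\<^sup>2) \<ge> 0\<close>, so \<open>V\<^sub>t\<close>
  is a submartingale with values in \<open>[0, 1]\<close>. In its Doob decomposition the predictable part
  is nondecreasing and bounded, and the martingale part has summable squared increments; it
  converges almost surely by Kolmogorov's maximal inequality.
\<close>

section \<open>Softmax policies\<close>

lemma sum_exp_pos: "0 < (\<Sum>a\<in>UNIV. exp ((\<theta> :: 'a::finite \<Rightarrow> real) a))"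
  by (intro sum_pos) auto

lemma softmax_pos: "0 < softmax \<theta> a"
  unfolding softmax_def using sum_exp_pos[of \<theta>] by simp

lemma sum_softmax: "(\<Sum>a\<in>UNIV. softmax \<theta> a) = 1"
  unfolding softmax_def using sum_exp_pos[of \<theta>] by (simp add: sum_divide_distrib[symmetric])

lemma softmax_le_1: "softmax \<theta> a \<le> 1"
proof -
  have "softmax \<theta> a \<le> (\<Sum>b\<in>UNIV. softmax \<theta> b)"
    by (rule member_le_sum) (auto intro: less_imp_le softmax_pos)
  then show ?thesis by (simp add: sum_softmax)
qed

lemma exp_reward_softmax_ge:
  assumes "\<And>a. lo \<le> r a"
  shows "lo \<le> exp_reward (softmax \<theta>) r"
proof -
  have "(\<Sum>a\<in>UNIV. softmax \<theta> a * lo) \<le> exp_reward (softmax \<theta>) r"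
    unfolding exp_reward_def by (intro sum_mono mult_left_mono) (simp_all add: assms less_imp_le softmax_pos)
  then show ?thesis by (simp add: sum_distrib_right[symmetric] sum_softmax)
qed

lemma exp_reward_softmax_le:
  assumes "\<And>a. r a \<le> hi"
  shows "exp_reward (softmax \<theta>) r \<le> hi"
proof -
  have "exp_reward (softmax \<theta>) r \<le> (\<Sum>a\<in>UNIV. softmax \<theta> a * hi)"
    unfolding exp_reward_def by (intro sum_mono mult_left_mono) (simp_all add: assms less_imp_le softmax_pos)
  then show ?thesis by (simp add: sum_distrib_right[symmetric] sum_softmax)
qed

lemma exp_reward_softmax:
  "exp_reward (softmax \<theta>) r = (\<Sum>a\<in>UNIV. exp (\<theta> a) * r a) / (\<Sum>a\<in>UNIV. exp (\<theta> a))"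
  unfolding exp_reward_def softmax_def by (simp add: sum_divide_distrib)

lemma sum_exp_bump:
  fixes \<theta> f :: "'a::finite \<Rightarrow> real"
  shows "(\<Sum>b\<in>UNIV. exp (\<theta> b + (if b = a then \<Delta> else 0)) * f b)
     = (\<Sum>b\<in>UNIV. exp (\<theta> b) * f b) + exp (\<theta> a) * (exp \<Delta> - 1) * f a"
proof -
  have "exp (\<theta> b + (if b = a then \<Delta> else 0)) * f b
      = exp (\<theta> b) * f b + (if b = a then exp (\<theta> a) * (exp \<Delta> - 1) * f a else 0)" for b
    by (simp add: exp_add algebra_simps)
  then show ?thesis by (simp add: sum.distrib)
qed

lemma softmax_add_const: "softmax (\<lambda>b. \<theta> b + c) = softmax \<theta>"
  by (rule ext) (simp add: softmax_def exp_add sum_distrib_right[symmetric])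

lemma one_plus_mult_exp_minus_one_pos:
  fixes p \<Delta> :: real
  assumes "0 < p" "p \<le> 1"
  shows "0 < 1 + p * (exp \<Delta> - 1)"
proof -
  have "1 + p * (exp \<Delta> - 1) = (1 - p) + p * exp \<Delta>" by (simp add: algebra_simps)
  moreover have "0 < p * exp \<Delta>" using assms by simp
  ultimately show ?thesis using assms by linarith
qed

lemma exp_reward_softmax_bump:
  fixes \<theta> :: "'a::finite \<Rightarrow> real" and a :: 'a and r :: "'a \<Rightarrow> real"
  defines "p \<equiv> softmax \<theta> a" and "V \<equiv> exp_reward (softmax \<theta>) r"
  shows "exp_reward (softmax (\<lambda>b. \<theta> b + c + (if b = a then \<Delta> else 0))) r - V
       = p * (exp \<Delta> - 1) / (1 + p * (exp \<Delta> - 1)) * (r a - V)"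
proof -
  define S where "S = (\<Sum>b\<in>UNIV. exp (\<theta> b))"
  define N where "N = (\<Sum>b\<in>UNIV. exp (\<theta> b) * r b)"
  define w where "w = exp (\<theta> a) * (exp \<Delta> - 1)"
  have S: "0 < S" unfolding S_def by (rule sum_exp_pos)
  have p: "p * (exp \<Delta> - 1) = w / S" and V: "V = N / S"
    unfolding p_def V_def S_def N_def w_def softmax_def exp_reward_softmax by simp_all
  have "0 < 1 + p * (exp \<Delta> - 1)"
    using softmax_pos softmax_le_1 unfolding p_def by (intro one_plus_mult_exp_minus_one_pos)
  then have Sw: "0 < S + w" using S unfolding p by (simp add: field_simps)
  have "softmax (\<lambda>b. \<theta> b + c + (if b = a then \<Delta> else 0))
      = softmax (\<lambda>b. \<theta> b + (if b = a then \<Delta> else 0))"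
    using softmax_add_const[of "\<lambda>b. \<theta> b + (if b = a then \<Delta> else 0)" c]
    by (simp add: algebra_simps)
  then have "exp_reward (softmax (\<lambda>b. \<theta> b + c + (if b = a then \<Delta> else 0))) r
      = exp_reward (softmax (\<lambda>b. \<theta> b + (if b = a then \<Delta> else 0))) r"
    by simp
  also have "\<dots> = (N + w * r a) / (S + w)"
    using sum_exp_bump[of \<theta> a \<Delta> r] sum_exp_bump[of \<theta> a \<Delta> "\<lambda>_. 1"]
    unfolding exp_reward_softmax S_def N_def w_def by simp
  also have "\<dots> - V = w / S / (1 + w / S) * (r a - V)"
  proof -
    have "1 + w / S = (S + w) / S" using S by (simp add: field_simps)
    then show ?thesis using S Sw unfolding V by (simp add: field_simps)
  qed
  finally show ?thesis unfolding p by (simp add: mult.assoc)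
qed

lemma update_true_eq:
  "(\<lambda>b. \<theta> b + \<eta> * (rhat_true \<theta> r a b - baseline \<theta> r a b))
     = (\<lambda>b. \<theta> b + \<eta> * exp_reward (softmax \<theta>) r
            + (if b = a then \<eta> * (r a - exp_reward (softmax \<theta>) r) / softmax \<theta> a else 0))"
  using softmax_pos[of \<theta> a] unfolding rhat_true_def baseline_def
  by (intro ext) (auto simp: field_simps)

lemma update_obs_eq:
  "(\<lambda>b. \<theta> b + k * (rhat_obs \<theta> x a b - baseline \<theta> r a b))
     = (\<lambda>b. \<theta> b + k * exp_reward (softmax \<theta>) r
            + (if b = a then k * (x - exp_reward (softmax \<theta>) r) / softmax \<theta> a else 0))"
  using softmax_pos[of \<theta> a] unfolding rhat_obs_def baseline_def
  by (intro ext) (auto simp: field_simps)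

lemma exp_reward_update_true_mono:
  fixes \<theta> :: "'a::finite \<Rightarrow> real"
  assumes "0 < \<eta>"
  shows "exp_reward (softmax \<theta>) r
           \<le> exp_reward (softmax (\<lambda>b. \<theta> b + \<eta> * (rhat_true \<theta> r a b - baseline \<theta> r a b))) r"
proof -
  define p where "p = softmax \<theta> a"
  define \<delta> where "\<delta> = r a - exp_reward (softmax \<theta>) r"
  define \<Delta> where "\<Delta> = \<eta> * \<delta> / p"
  have p: "0 < p" "p \<le> 1" unfolding p_def using softmax_pos softmax_le_1 by auto
  have "0 \<le> (exp \<Delta> - 1) * \<delta>"
    using assms p by (cases "0 \<le> \<delta>") (auto simp: \<Delta>_def zero_le_mult_iff mult_le_0_iff divide_le_0_iff)
  then have "0 \<le> p * (exp \<Delta> - 1) / (1 + p * (exp \<Delta> - 1)) * \<delta>"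
    using p one_plus_mult_exp_minus_one_pos[OF p, of \<Delta>] by (simp add: mult.assoc)
  also have "\<dots> = exp_reward (softmax (\<lambda>b. \<theta> b + \<eta> * (rhat_true \<theta> r a b - baseline \<theta> r a b))) r
      - exp_reward (softmax \<theta>) r"
    unfolding update_true_eq p_def \<delta>_def \<Delta>_def by (rule exp_reward_softmax_bump[symmetric])
  finally show ?thesis by simp
qed

lemma convergent_exp_reward_update_true:
  fixes \<theta> :: "nat \<Rightarrow> 'a::finite \<Rightarrow> real" and a :: "nat \<Rightarrow> 'a"
  assumes "0 < \<eta>" and "\<And>b. r b \<le> hi"
    and "\<And>t. \<theta> (Suc t) = (\<lambda>b. \<theta> t b + \<eta> * (rhat_true (\<theta> t) r (a t) b - baseline (\<theta> t) r (a t) b))"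
  shows "convergent (\<lambda>t. exp_reward (softmax (\<theta> t)) r)"
proof -
  have "incseq (\<lambda>t. exp_reward (softmax (\<theta> t)) r)"
  proof (rule incseq_SucI)
    show "exp_reward (softmax (\<theta> t)) r \<le> exp_reward (softmax (\<theta> (Suc t))) r" for t
      unfolding assms(3) by (rule exp_reward_update_true_mono[OF assms(1)])
  qed
  moreover have "\<forall>t. exp_reward (softmax (\<theta> t)) r \<le> hi"
    using exp_reward_softmax_le[of r hi] assms(2) by blast
  ultimately obtain L where "(\<lambda>t. exp_reward (softmax (\<theta> t)) r) \<longlonglongrightarrow> L"
    using incseq_convergent by blast
  then show ?thesis by (auto simp: convergent_def)
qed

section \<open>A second-order bound for the observed-reward update\<close>

lemma exp_le_one_plus_sq:
  fixes y :: real
  assumes "\<bar>y\<bar> \<le> 1"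
  shows "exp y \<le> 1 + y + y\<^sup>2"
proof (cases "0 \<le> y")
  case True
  then show ?thesis using exp_bound[of y] assms by simp
next
  case False
  have "exp y * (1 - y) \<le> exp y * exp (- y)"
    using exp_ge_add_one_self[of "- y"] by (intro mult_left_mono) auto
  also have "\<dots> = 1" by (simp add: exp_minus_inverse)
  also have "\<dots> \<le> 1 - y ^ 3"
    using False by (simp add: power3_eq_cube mult_nonneg_nonpos)
  also have "\<dots> = (1 + y + y\<^sup>2) * (1 - y)"
    by (simp add: algebra_simps power2_eq_square power3_eq_cube)
  finally show ?thesis using False by simp
qed

lemma bump_factor_bounds:
  fixes p \<Delta> :: real
  assumes p: "0 < p" "p \<le> 1" and \<Delta>: "\<bar>\<Delta>\<bar> \<le> 1"
  defines "w \<equiv> exp \<Delta> - 1"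
  shows "\<Delta> - \<Delta>\<^sup>2 \<le> w / (1 + p * w)" "w / (1 + p * w) \<le> \<Delta> + \<Delta>\<^sup>2"
proof -
  have pw: "0 < 1 + p * w" unfolding w_def by (rule one_plus_mult_exp_minus_one_pos[OF p])
  have w: "0 < 1 + w" unfolding w_def by simp
  have "w / (1 + p * w) \<le> w"
    using pw p by (simp add: divide_le_eq algebra_simps)
  also have "w \<le> \<Delta> + \<Delta>\<^sup>2" using exp_le_one_plus_sq[OF \<Delta>] unfolding w_def by simp
  finally show "w / (1 + p * w) \<le> \<Delta> + \<Delta>\<^sup>2" .
  have "\<Delta> - \<Delta>\<^sup>2 \<le> 1 - exp (- \<Delta>)" using exp_le_one_plus_sq[of "- \<Delta>"] \<Delta> by simp
  also have "1 - exp (- \<Delta>) = w / (1 + w)" unfolding w_def by (simp add: field_simps exp_minus)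
  also have "w / (1 + w) \<le> w / (1 + p * w)"
  proof -
    have "w / (1 + p * w) - w / (1 + w) = w\<^sup>2 * (1 - p) / ((1 + p * w) * (1 + w))"
      using pw w by (simp add: field_simps power2_eq_square)
    moreover have "0 \<le> w\<^sup>2 * (1 - p) / ((1 + p * w) * (1 + w))"
      using pw w p by simp
    ultimately show ?thesis by simp
  qed
  finally show "\<Delta> - \<Delta>\<^sup>2 \<le> w / (1 + p * w)" .
qed

lemma bump_gain_ge:
  fixes p \<Delta> \<delta> :: real
  assumes p: "0 < p" "p \<le> 1" and \<Delta>: "\<bar>\<Delta>\<bar> \<le> 1"
  shows "p * \<delta> * \<Delta> - p * \<bar>\<delta>\<bar> * \<Delta>\<^sup>2 \<le> p * (exp \<Delta> - 1) / (1 + p * (exp \<Delta> - 1)) * \<delta>"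
proof -
  define f where "f = (exp \<Delta> - 1) / (1 + p * (exp \<Delta> - 1))"
  have f: "\<Delta> - \<Delta>\<^sup>2 \<le> f" "f \<le> \<Delta> + \<Delta>\<^sup>2" using bump_factor_bounds[OF p \<Delta>] unfolding f_def by auto
  have "\<delta> * \<Delta> - \<bar>\<delta>\<bar> * \<Delta>\<^sup>2 \<le> \<delta> * f"
  proof (cases "0 \<le> \<delta>")
    case True
    then have "\<delta> * (\<Delta> - \<Delta>\<^sup>2) \<le> \<delta> * f" using f by (intro mult_left_mono) auto
    then show ?thesis using True by (simp add: algebra_simps)
  next
    case False
    then have "\<delta> * (\<Delta> + \<Delta>\<^sup>2) \<le> \<delta> * f" using f by (intro mult_left_mono_neg) auto
    then show ?thesis using False by (simp add: algebra_simps)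
  qed
  then have "p * (\<delta> * \<Delta> - \<bar>\<delta>\<bar> * \<Delta>\<^sup>2) \<le> p * (\<delta> * f)" using p by (intro mult_left_mono) auto
  then show ?thesis unfolding f_def by (simp add: algebra_simps)
qed

text \<open>The lower bound \<open>p \<delta> \<Delta> - p |\<delta>| \<Delta>\<^sup>2\<close> of \<open>bump_gain_ge\<close> at the step \<open>\<Delta> = |\<delta>| (x - V) / (8 R\<^sup>2)\<close> of
  the observed-reward update, where \<open>\<delta> = r a - V\<close> and \<open>eta_obs = p |\<delta>| / (8 R\<^sup>2)\<close>.\<close>
definition obs_gain_bound :: "real \<Rightarrow> ('a::finite \<Rightarrow> real) \<Rightarrow> ('a \<Rightarrow> real) \<Rightarrow> 'a \<Rightarrow> real \<Rightarrow> real"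
  where "obs_gain_bound R \<theta> r a x =
    (let V = exp_reward (softmax \<theta>) r; \<delta> = r a - V
     in eta_obs \<theta> r R a * (\<delta> * (x - V) - \<delta>\<^sup>2 / (8 * R\<^sup>2) * (x - V)\<^sup>2))"

lemma exp_reward_update_obs_ge:
  fixes \<theta> :: "'a::finite \<Rightarrow> real"
  assumes R: "0 < R" and r: "\<And>b. 0 \<le> r b" "\<And>b. r b \<le> R" and x: "\<bar>x\<bar> \<le> R"
  shows "obs_gain_bound R \<theta> r a x
           \<le> exp_reward (softmax (\<lambda>b. \<theta> b + eta_obs \<theta> r R a * (rhat_obs \<theta> x a b - baseline \<theta> r a b))) r
             - exp_reward (softmax \<theta>) r"
proof -
  define p where "p = softmax \<theta> a"
  define V where "V = exp_reward (softmax \<theta>) r"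
  define \<delta> where "\<delta> = r a - V"
  define \<kappa> where "\<kappa> = \<bar>\<delta>\<bar> / (8 * R\<^sup>2)"
  define \<Delta> where "\<Delta> = \<kappa> * (x - V)"
  have p: "0 < p" "p \<le> 1" unfolding p_def using softmax_pos softmax_le_1 by auto
  have V: "0 \<le> V" "V \<le> R" unfolding V_def using r by (auto intro: exp_reward_softmax_ge exp_reward_softmax_le)
  have \<eta>: "eta_obs \<theta> r R a = p * \<kappa>" unfolding eta_obs_def p_def \<kappa>_def \<delta>_def V_def by simp
  have "\<bar>\<Delta>\<bar> = \<bar>\<delta>\<bar> * \<bar>x - V\<bar> / (8 * R\<^sup>2)" unfolding \<Delta>_def \<kappa>_def by (simp add: abs_mult)
  also have "\<dots> \<le> R * (2 * R) / (8 * R\<^sup>2)"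
    using R V x r[of a] unfolding \<delta>_def by (intro divide_right_mono mult_mono) auto
  also have "\<dots> \<le> 1" using R by (simp add: power2_eq_square field_simps)
  finally have \<Delta>1: "\<bar>\<Delta>\<bar> \<le> 1" .
  have \<delta>\<kappa>: "\<bar>\<delta>\<bar> * \<kappa> = \<delta>\<^sup>2 / (8 * R\<^sup>2)"
    unfolding \<kappa>_def by (simp add: power2_eq_square abs_mult_self_eq)
  have "obs_gain_bound R \<theta> r a x = p * \<kappa> * (\<delta> * (x - V) - \<bar>\<delta>\<bar> * \<kappa> * (x - V)\<^sup>2)"
    unfolding obs_gain_bound_def Let_def \<eta> V_def[symmetric] \<delta>_def[symmetric] \<delta>\<kappa> ..
  also have "\<dots> = p * \<delta> * \<Delta> - p * \<bar>\<delta>\<bar> * \<Delta>\<^sup>2"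
    unfolding \<Delta>_def by (simp add: power2_eq_square algebra_simps)
  also have "\<dots> \<le> p * (exp \<Delta> - 1) / (1 + p * (exp \<Delta> - 1)) * \<delta>"
    by (rule bump_gain_ge[OF p \<Delta>1])
  also have "\<dots> = exp_reward (softmax (\<lambda>b. \<theta> b + eta_obs \<theta> r R a * V
                   + (if b = a then \<Delta> else 0))) r - V"
    unfolding p_def \<delta>_def V_def by (rule exp_reward_softmax_bump[symmetric])
  also have "(\<lambda>b. \<theta> b + eta_obs \<theta> r R a * V + (if b = a then \<Delta> else 0))
      = (\<lambda>b. \<theta> b + eta_obs \<theta> r R a * (rhat_obs \<theta> x a b - baseline \<theta> r a b))"
    unfolding update_obs_eq \<eta> \<Delta>_def V_def p_def using p unfolding p_def by auto
  finally show ?thesis unfolding V_def .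
qed

lemma eta_obs_nonneg: "0 \<le> eta_obs \<theta> r R a"
  unfolding eta_obs_def using softmax_pos[of \<theta> a] by simp

lemma obs_gain_bound_ge_linear:
  fixes \<theta> :: "'a::finite \<Rightarrow> real"
  assumes R: "0 < R" and r: "\<And>b. 0 \<le> r b" "\<And>b. r b \<le> R" and x: "\<bar>x\<bar> \<le> R"
  defines "V \<equiv> exp_reward (softmax \<theta>) r"
  shows "eta_obs \<theta> r R a * ((r a - V) * (x - V) - (r a - V)\<^sup>2 / 2) \<le> obs_gain_bound R \<theta> r a x"
proof -
  have "0 \<le> V" "V \<le> R" unfolding V_def using r by (auto intro: exp_reward_softmax_ge exp_reward_softmax_le)
  then have "\<bar>x - V\<bar> \<le> \<bar>2 * R\<bar>" using x R by auto
  then have "(r a - V)\<^sup>2 / (8 * R\<^sup>2) * (x - V)\<^sup>2 \<le> (r a - V)\<^sup>2 / (8 * R\<^sup>2) * (2 * R)\<^sup>2"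
    unfolding abs_le_square_iff by (intro mult_left_mono) auto
  also have "\<dots> = (r a - V)\<^sup>2 / 2" using R by (simp add: power2_eq_square field_simps)
  finally show ?thesis
    unfolding obs_gain_bound_def Let_def V_def[symmetric] by (intro mult_left_mono eta_obs_nonneg) auto
qed

lemma integral_obs_gain_bound_nonneg:
  fixes \<nu> :: "real measure" and \<theta> :: "'a::finite \<Rightarrow> real"
  assumes \<nu>: "prob_space \<nu>" "sets \<nu> = sets borel" and supp: "AE x in \<nu>. \<bar>x\<bar> \<le> R"
    and mean: "(\<integral>x. x \<partial>\<nu>) = r a"
    and R: "0 < R" and r: "\<And>b. 0 \<le> r b" "\<And>b. r b \<le> R"
  shows "0 \<le> (\<integral>x. obs_gain_bound R \<theta> r a x \<partial>\<nu>)"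
proof -
  interpret \<nu>: prob_space \<nu> by (rule \<nu>(1))
  define V where "V = exp_reward (softmax \<theta>) r"
  define \<eta> where "\<eta> = eta_obs \<theta> r R a"
  have V: "0 \<le> V" "V \<le> R" unfolding V_def using r by (auto intro: exp_reward_softmax_ge exp_reward_softmax_le)
  have borel_\<nu>: "f \<in> borel_measurable \<nu>" if "f \<in> borel_measurable borel" for f :: "real \<Rightarrow> real"
    using that unfolding measurable_cong_sets[OF \<nu>(2) refl] .
  have [measurable]: "(\<lambda>x. x) \<in> borel_measurable \<nu>" "(\<lambda>x. (x - V)\<^sup>2) \<in> borel_measurable \<nu>"
    by (rule borel_\<nu>, measurable)+
  have ix: "integrable \<nu> (\<lambda>x. x)"
    by (rule \<nu>.integrable_const_bound[where B=R]) (use supp in auto)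
  have "AE x in \<nu>. \<bar>(x - V)\<^sup>2\<bar> \<le> (2 * R)\<^sup>2"
    using supp
  proof eventually_elim
    case (elim x)
    then have "\<bar>x - V\<bar> \<le> \<bar>2 * R\<bar>" using V by auto
    then show ?case unfolding abs_le_square_iff by simp
  qed
  then have ix2: "integrable \<nu> (\<lambda>x. (x - V)\<^sup>2)"
    by (intro \<nu>.integrable_const_bound[where B="(2 * R)\<^sup>2"]) auto
  have "0 \<le> \<eta> * (r a - V)\<^sup>2 / 2" unfolding \<eta>_def using eta_obs_nonneg[of \<theta> r R a] by simp
  also have "\<dots> = (\<integral>x. \<eta> * ((r a - V) * (x - V) - (r a - V)\<^sup>2 / 2) \<partial>\<nu>)"
    using ix mean by (simp add: \<nu>.prob_space power2_eq_square field_simps)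
  also have "\<dots> \<le> (\<integral>x. obs_gain_bound R \<theta> r a x \<partial>\<nu>)"
  proof (rule integral_mono_AE)
    show "integrable \<nu> (\<lambda>x. \<eta> * ((r a - V) * (x - V) - (r a - V)\<^sup>2 / 2))" using ix by simp
    show "integrable \<nu> (\<lambda>x. obs_gain_bound R \<theta> r a x)"
      unfolding obs_gain_bound_def Let_def V_def[symmetric] using ix ix2 by simp
    show "AE x in \<nu>. \<eta> * ((r a - V) * (x - V) - (r a - V)\<^sup>2 / 2) \<le> obs_gain_bound R \<theta> r a x"
      using supp unfolding \<eta>_def V_def by eventually_elim (rule obs_gain_bound_ge_linear[OF R r])
  qed
  finally show ?thesis .
qed

definition obs_gain_coeff :: "real \<Rightarrow> ('a::finite \<Rightarrow> real) \<Rightarrow> ('a \<Rightarrow> real) \<Rightarrow> 'a \<Rightarrow> nat \<Rightarrow> real"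
  where "obs_gain_coeff R \<theta> r a j =
    (let V = exp_reward (softmax \<theta>) r; \<delta> = r a - V; \<eta> = eta_obs \<theta> r R a; k = \<delta>\<^sup>2 / (8 * R\<^sup>2)
     in if j = 0 then - \<eta> * (\<delta> * V + k * V\<^sup>2) else if j = 1 then \<eta> * (\<delta> + 2 * k * V) else - \<eta> * k)"

lemma obs_gain_bound_expand:
  "obs_gain_bound R \<theta> r a x = (\<Sum>j<3. obs_gain_coeff R \<theta> r a j * x ^ j)"
proof -
  define V where "V = exp_reward (softmax \<theta>) r"
  define \<delta> where "\<delta> = r a - V"
  define \<eta> where "\<eta> = eta_obs \<theta> r R a"
  define k where "k = \<delta>\<^sup>2 / (8 * R\<^sup>2)"
  have "obs_gain_bound R \<theta> r a x = \<eta> * (\<delta> * (x - V) - k * (x - V)\<^sup>2)"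
    "obs_gain_coeff R \<theta> r a j = (if j = 0 then - \<eta> * (\<delta> * V + k * V\<^sup>2)
       else if j = 1 then \<eta> * (\<delta> + 2 * k * V) else - \<eta> * k)" for j
    unfolding obs_gain_bound_def obs_gain_coeff_def Let_def V_def \<delta>_def \<eta>_def k_def by simp_all
  then show ?thesis by (simp add: numeral_3_eq_3 power2_eq_square algebra_simps)
qed

lemma abs_obs_gain_coeff_le:
  fixes \<theta> :: "'a::finite \<Rightarrow> real"
  assumes R: "0 < R" and r: "\<And>b. r b \<in> {0..1}"
  shows "\<bar>obs_gain_coeff R \<theta> r a j\<bar> \<le> 1 / (8 * R\<^sup>2) * (1 + 2 / (8 * R\<^sup>2))"
proof -
  define L where "L = 1 / (8 * R\<^sup>2)"
  define V where "V = exp_reward (softmax \<theta>) r"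
  define \<delta> where "\<delta> = r a - V"
  define \<eta> where "\<eta> = eta_obs \<theta> r R a"
  define k where "k = \<delta>\<^sup>2 / (8 * R\<^sup>2)"
  have V: "0 \<le> V" "V \<le> 1" unfolding V_def using r by (auto intro: exp_reward_softmax_ge exp_reward_softmax_le)
  have \<delta>: "\<bar>\<delta>\<bar> \<le> 1" unfolding \<delta>_def using V r[of a] by auto
  have k: "0 \<le> k" "k \<le> L" unfolding k_def L_def using \<delta> by (auto intro!: divide_right_mono simp: abs_square_le_1)
  have \<eta>: "0 \<le> \<eta>" "\<eta> \<le> L"
    unfolding \<eta>_def eta_obs_def L_def V_def[symmetric] \<delta>_def[symmetric]
    using \<delta> softmax_pos[of \<theta> a] softmax_le_1[of \<theta> a]
    by (auto intro!: divide_right_mono mult_le_one)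
  have "\<bar>\<delta> * V\<bar> \<le> 1" "k * V\<^sup>2 \<le> k" "k * V \<le> k" "0 \<le> k * V\<^sup>2" "0 \<le> k * V"
    using V \<delta> k by (auto simp: abs_mult intro: mult_le_one mult_left_le power_le_one)
  then have "\<bar>\<delta> * V + k * V\<^sup>2\<bar> \<le> 1 + 2 * L" "\<bar>\<delta> + 2 * k * V\<bar> \<le> 1 + 2 * L" "\<bar>k\<bar> \<le> 1 + 2 * L"
    using \<delta> k by arith+
  then have "\<bar>obs_gain_coeff R \<theta> r a j\<bar> \<le> L * (1 + 2 * L)"
    unfolding obs_gain_coeff_def Let_def V_def[symmetric] \<delta>_def[symmetric] \<eta>_def[symmetric] k_def[symmetric]
    using \<eta> k by (auto simp: abs_mult intro!: mult_mono)
  then show ?thesis unfolding L_def by simp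
qed

section \<open>Submartingales with values in the unit interval converge\<close>

lemma abs_mult_le:
  fixes x y :: real
  assumes "\<bar>x\<bar> \<le> B" "\<bar>y\<bar> \<le> C"
  shows "\<bar>x * y\<bar> \<le> B * C"
  unfolding abs_mult using assms by (intro mult_mono) auto

lemma (in finite_measure) integrable_bounded:
  fixes f :: "'a \<Rightarrow> real"
  assumes "f \<in> borel_measurable M" "\<And>x. x \<in> space M \<Longrightarrow> \<bar>f x\<bar> \<le> B"
  shows "integrable M f"
  using assms by (intro integrable_const_bound[where B=B]) auto

lemma (in finite_measure) integrable_bounded_mult:
  fixes f g :: "'a \<Rightarrow> real"
  assumes "f \<in> borel_measurable M" "\<And>x. x \<in> space M \<Longrightarrow> \<bar>f x\<bar> \<le> B"
    and "g \<in> borel_measurable M" "\<And>x. x \<in> space M \<Longrightarrow> \<bar>g x\<bar> \<le> C"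
  shows "integrable M (\<lambda>x. f x * g x)"
  using assms by (intro integrable_bounded[where B="B * C"] abs_mult_le) auto

lemma integral_sum_sum:
  fixes f :: "'i \<Rightarrow> 'j \<Rightarrow> 'a \<Rightarrow> real"
  assumes "\<And>i j. i \<in> I \<Longrightarrow> j \<in> J \<Longrightarrow> integrable M (f i j)"
  shows "(\<integral>x. (\<Sum>i\<in>I. \<Sum>j\<in>J. f i j x) \<partial>M) = (\<Sum>i\<in>I. \<Sum>j\<in>J. \<integral>x. f i j x \<partial>M)"
  using assms by (subst Bochner_Integration.integral_sum) (auto intro!: sum.cong Bochner_Integration.integral_sum)

locale filtered_prob_space = prob_space M for M :: "'w measure" +
  fixes F :: "nat \<Rightarrow> 'w measure"
  assumes subalgebra_F: "\<And>t. subalgebra M (F t)"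
    and sets_F_Suc: "\<And>t. sets (F t) \<subseteq> sets (F (Suc t))"
begin

lemma space_F: "space (F t) = space M"
  using subalgebra_F[of t] unfolding subalgebra_def by simp

lemma sets_F_mono: "s \<le> t \<Longrightarrow> sets (F s) \<subseteq> sets (F t)"
  by (induction t rule: dec_induct) (use sets_F_Suc in auto)

lemma measurable_F_mono: "s \<le> t \<Longrightarrow> f \<in> measurable (F s) N \<Longrightarrow> f \<in> measurable (F t) N"
  by (rule measurable_from_subalg[of "F t" "F s"]) (auto simp: subalgebra_def space_F sets_F_mono)

lemma measurable_F_imp_M: "f \<in> measurable (F t) N \<Longrightarrow> f \<in> measurable M N"
  by (rule measurable_from_subalg[OF subalgebra_F])

lemma sets_F_imp_M: "A \<in> sets (F t) \<Longrightarrow> A \<in> sets M"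
  using subalgebra_F[of t] unfolding subalgebra_def by auto

lemma space_in_F [measurable]: "space M \<in> sets (F t)"
  using sets.top[of "F t"] by (simp add: space_F)

lemma sigma_finite_subalgebra_F: "sigma_finite_subalgebra M (F t)"
  by (rule finite_measure_subalgebra_is_sigma_finite) (unfold_locales, rule subalgebra_F)

lemma integral_mult_cond_exp:
  fixes Z f :: "'w \<Rightarrow> real"
  assumes Z: "Z \<in> borel_measurable (F t)" "\<And>\<omega>. \<omega> \<in> space M \<Longrightarrow> \<bar>Z \<omega>\<bar> \<le> B"
    and f: "f \<in> borel_measurable M" "\<And>\<omega>. \<omega> \<in> space M \<Longrightarrow> \<bar>f \<omega>\<bar> \<le> C"
  shows "(\<integral>\<omega>. Z \<omega> * real_cond_exp M (F t) f \<omega> \<partial>M) = (\<integral>\<omega>. Z \<omega> * f \<omega> \<partial>M)"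
proof -
  interpret sigma_finite_subalgebra M "F t" by (rule sigma_finite_subalgebra_F)
  have "integrable M (\<lambda>\<omega>. Z \<omega> * f \<omega>)"
    using measurable_F_imp_M[OF Z(1)] Z(2) f by (intro integrable_bounded_mult)
  then show ?thesis by (rule real_cond_exp_intg(2)[OF _ Z(1) f(1)])
qed

end

text \<open>The submartingale property is tested against \<open>F t\<close>-measurable weights in \<open>[0, 1]\<close>
  instead of being stated with conditional expectations.\<close>
locale submartingale_01 = filtered_prob_space M F for M :: "'w measure" and F +
  fixes V :: "nat \<Rightarrow> 'w \<Rightarrow> real"
  assumes adapted: "\<And>t. V t \<in> borel_measurable (F t)"
    and range_V: "\<And>t \<omega>. \<omega> \<in> space M \<Longrightarrow> V t \<omega> \<in> {0..1}"
    and submartingale: "\<And>t Y. Y \<in> borel_measurable (F t) \<Longrightarrow> (\<And>\<omega>. \<omega> \<in> space M \<Longrightarrow> Y \<omega> \<in> {0..1})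
      \<Longrightarrow> 0 \<le> (\<integral>\<omega>. Y \<omega> * (V (Suc t) \<omega> - V t \<omega>) \<partial>M)"
begin

lemma V_measurable [measurable]: "V t \<in> borel_measurable M"
  by (rule measurable_F_imp_M[OF adapted])

definition increment :: "nat \<Rightarrow> 'w \<Rightarrow> real"
  where "increment t \<omega> = V (Suc t) \<omega> - V t \<omega>"

text \<open>Doob decomposition. The conditional expectation of the increment lies in \<open>[0, 1]\<close> almost
  surely; clipping it to \<open>[0, 1]\<close> makes the drift bounded and nonnegative everywhere.\<close>
definition drift :: "nat \<Rightarrow> 'w \<Rightarrow> real"
  where "drift t \<omega> = max 0 (min 1 (real_cond_exp M (F t) (increment t) \<omega>))"

definition mart_diff :: "nat \<Rightarrow> 'w \<Rightarrow> real"
  where "mart_diff t \<omega> = increment t \<omega> - drift t \<omega>"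

definition mart :: "nat \<Rightarrow> nat \<Rightarrow> 'w \<Rightarrow> real"
  where "mart m n \<omega> = (\<Sum>s\<in>{m..<n}. mart_diff s \<omega>)"

lemma increment_measurable_F: "increment t \<in> borel_measurable (F (Suc t))"
  unfolding increment_def using adapted[of "Suc t"] measurable_F_mono[OF _ adapted[of t], of "Suc t"]
  by measurable

lemma increment_measurable [measurable]: "increment t \<in> borel_measurable M"
  by (rule measurable_F_imp_M[OF increment_measurable_F])

lemma abs_increment_le: "\<omega> \<in> space M \<Longrightarrow> \<bar>increment t \<omega>\<bar> \<le> 1"
  unfolding increment_def using range_V[of \<omega> t] range_V[of \<omega> "Suc t"] by auto

lemma cond_exp_increment_nonneg: "AE \<omega> in M. 0 \<le> real_cond_exp M (F t) (increment t) \<omega>"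
proof -
  define h where "h = real_cond_exp M (F t) (increment t)"
  define G where "G = {\<omega> \<in> space M. h \<omega> < 0}"
  have "G \<in> sets (F t)" unfolding G_def h_def by measurable
  then have G[measurable]: "G \<in> sets M" "indicator G \<in> borel_measurable (F t)"
    by (auto intro: sets_F_imp_M)
  have "0 \<le> (\<integral>\<omega>. indicator G \<omega> * increment t \<omega> \<partial>M)"
    using submartingale[OF G(2)] unfolding increment_def by (auto simp: indicator_def)
  also have "\<dots> = (\<integral>\<omega>. indicator G \<omega> * h \<omega> \<partial>M)"
    unfolding h_def using abs_increment_le
    by (intro integral_mult_cond_exp[symmetric, where B=1 and C=1, OF G(2)]) (auto simp: indicator_def)
  finally have "0 \<le> (\<integral>\<omega>. indicator G \<omega> * h \<omega> \<partial>M)" .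
  moreover have "0 \<le> (\<integral>\<omega>. - (indicator G \<omega> * h \<omega>) \<partial>M)"
    by (intro integral_nonneg_AE) (auto simp: G_def indicator_def)
  ultimately have "(\<integral>\<omega>. - (indicator G \<omega> * h \<omega>) \<partial>M) = 0" by simp
  moreover have "integrable M (\<lambda>\<omega>. - (indicator G \<omega> * h \<omega>))"
  proof -
    interpret sigma_finite_subalgebra M "F t" by (rule sigma_finite_subalgebra_F)
    have "integrable M h"
      unfolding h_def using abs_increment_le by (intro real_cond_exp_int(1) integrable_bounded) auto
    then show ?thesis using integrable_real_mult_indicator[OF G(1)] by (simp add: mult.commute)
  qed
  ultimately have "AE \<omega> in M. - (indicator G \<omega> * h \<omega>) = 0"
    by (subst integral_nonneg_eq_0_iff_AE[symmetric]) (auto simp: G_def indicator_def)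
  then show ?thesis
    using AE_space by eventually_elim (auto simp: G_def h_def indicator_def split: if_splits)
qed

lemma cond_exp_increment_le_1: "AE \<omega> in M. real_cond_exp M (F t) (increment t) \<omega> \<le> 1"
proof -
  interpret sigma_finite_subalgebra M "F t" by (rule sigma_finite_subalgebra_F)
  show ?thesis
    using abs_increment_le by (intro real_cond_exp_le_c integrable_bounded) (auto simp: abs_le_iff)
qed

lemma drift_measurable_F: "drift t \<in> borel_measurable (F t)"
  unfolding drift_def by measurable

lemma drift_measurable [measurable]: "drift t \<in> borel_measurable M"
  by (rule measurable_F_imp_M[OF drift_measurable_F])

lemma drift_bounds: "0 \<le> drift t \<omega>" "drift t \<omega> \<le> 1"
  unfolding drift_def by auto

lemma integral_mult_drift:
  assumes Z: "Z \<in> borel_measurable (F t)" "\<And>\<omega>. \<omega> \<in> space M \<Longrightarrow> \<bar>Z \<omega>\<bar> \<le> B"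
  shows "(\<integral>\<omega>. Z \<omega> * drift t \<omega> \<partial>M) = (\<integral>\<omega>. Z \<omega> * increment t \<omega> \<partial>M)"
proof -
  have "AE \<omega> in M. drift t \<omega> = real_cond_exp M (F t) (increment t) \<omega>"
    using cond_exp_increment_nonneg[of t] cond_exp_increment_le_1[of t]
    by eventually_elim (auto simp: drift_def)
  then have "(\<integral>\<omega>. Z \<omega> * drift t \<omega> \<partial>M) = (\<integral>\<omega>. Z \<omega> * real_cond_exp M (F t) (increment t) \<omega> \<partial>M)"
    using measurable_F_imp_M[OF Z(1)] by (intro integral_cong_AE) auto
  also have "\<dots> = (\<integral>\<omega>. Z \<omega> * increment t \<omega> \<partial>M)"
    using Z abs_increment_le by (intro integral_mult_cond_exp) auto
  finally show ?thesis .
qed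

lemma mart_diff_measurable_F: "mart_diff t \<in> borel_measurable (F (Suc t))"
  unfolding mart_diff_def
  using increment_measurable_F measurable_F_mono[OF _ drift_measurable_F, of t "Suc t"] by measurable

lemma mart_diff_measurable [measurable]: "mart_diff t \<in> borel_measurable M"
  by (rule measurable_F_imp_M[OF mart_diff_measurable_F])

lemma abs_mart_diff_le: "\<omega> \<in> space M \<Longrightarrow> \<bar>mart_diff t \<omega>\<bar> \<le> 2"
  unfolding mart_diff_def using abs_increment_le[of \<omega> t] drift_bounds[of t \<omega>] by auto

lemma integral_mult_mart_diff:
  assumes Z: "Z \<in> borel_measurable (F k)" "\<And>\<omega>. \<omega> \<in> space M \<Longrightarrow> \<bar>Z \<omega>\<bar> \<le> B" and "k \<le> t"
  shows "(\<integral>\<omega>. Z \<omega> * mart_diff t \<omega> \<partial>M) = 0"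
proof -
  have Zt: "Z \<in> borel_measurable (F t)" using measurable_F_mono[OF \<open>k \<le> t\<close> Z(1)] .
  have [measurable]: "Z \<in> borel_measurable M" using measurable_F_imp_M[OF Z(1)] .
  have "integrable M (\<lambda>\<omega>. Z \<omega> * increment t \<omega>)" "integrable M (\<lambda>\<omega>. Z \<omega> * drift t \<omega>)"
    using Z(2) abs_increment_le drift_bounds by (auto intro!: integrable_bounded_mult[where C=1])
  then show ?thesis
    unfolding mart_diff_def right_diff_distrib using integral_mult_drift[OF Zt Z(2)] by simp
qed

lemma mart_measurable_F: "mart m n \<in> borel_measurable (F n)"
  unfolding mart_def
proof (rule borel_measurable_sum)
  fix s assume "s \<in> {m..<n}"
  then show "mart_diff s \<in> borel_measurable (F n)"
    using measurable_F_mono[OF _ mart_diff_measurable_F[of s], of n] by auto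
qed

lemma mart_measurable [measurable]: "mart m n \<in> borel_measurable M"
  by (rule measurable_F_imp_M[OF mart_measurable_F])

lemma abs_mart_le: "\<omega> \<in> space M \<Longrightarrow> \<bar>mart m n \<omega>\<bar> \<le> 2 * real n"
proof -
  assume \<omega>: "\<omega> \<in> space M"
  have "\<bar>mart m n \<omega>\<bar> \<le> (\<Sum>s\<in>{m..<n}. \<bar>mart_diff s \<omega>\<bar>)" unfolding mart_def by (rule sum_abs)
  also have "\<dots> \<le> real (card {m..<n}) * 2" by (rule sum_bounded_above) (use abs_mart_diff_le \<omega> in auto)
  also have "\<dots> \<le> 2 * real n" by simp
  finally show ?thesis .
qed

lemma mart_split: "m \<le> k \<Longrightarrow> k \<le> n \<Longrightarrow> mart m n \<omega> = mart m k \<omega> + mart k n \<omega>"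
  unfolding mart_def by (simp add: sum.atLeastLessThan_concat)

lemma integral_mult_mart:
  assumes Z: "Z \<in> borel_measurable (F k)" "\<And>\<omega>. \<omega> \<in> space M \<Longrightarrow> \<bar>Z \<omega>\<bar> \<le> B" and "k \<le> n"
  shows "(\<integral>\<omega>. Z \<omega> * mart k n \<omega> \<partial>M) = 0"
proof -
  have [measurable]: "Z \<in> borel_measurable M" using measurable_F_imp_M[OF Z(1)] .
  have "integrable M (\<lambda>\<omega>. Z \<omega> * mart_diff s \<omega>)" for s
    using Z(2) abs_mart_diff_le by (intro integrable_bounded_mult) auto
  then have "(\<integral>\<omega>. Z \<omega> * mart k n \<omega> \<partial>M) = (\<Sum>s\<in>{k..<n}. (\<integral>\<omega>. Z \<omega> * mart_diff s \<omega> \<partial>M))"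
    unfolding mart_def sum_distrib_left by (intro Bochner_Integration.integral_sum) auto
  also have "\<dots> = 0"
    using integral_mult_mart_diff[OF Z] by (intro sum.neutral) auto
  finally show ?thesis .
qed

lemma integrable_mart_sq: "integrable M (\<lambda>\<omega>. (mart m n \<omega>)\<^sup>2)"
  unfolding power2_eq_square using abs_mart_le by (intro integrable_bounded_mult) auto

lemma integrable_indicator_mult_mart_sq:
  "A \<in> sets M \<Longrightarrow> integrable M (\<lambda>\<omega>. indicator A \<omega> * (mart m n \<omega>)\<^sup>2)"
  using integrable_mult_indicator[OF _ integrable_mart_sq] by simp

lemma integral_mart_sq: "m \<le> n \<Longrightarrow> (\<integral>\<omega>. (mart m n \<omega>)\<^sup>2 \<partial>M) = (\<Sum>s\<in>{m..<n}. (\<integral>\<omega>. (mart_diff s \<omega>)\<^sup>2 \<partial>M))"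
proof (induction n rule: dec_induct)
  case base
  then show ?case by (simp add: mart_def)
next
  case (step n)
  have "mart m (Suc n) \<omega> = mart m n \<omega> + mart_diff n \<omega>" for \<omega>
    using step(1) unfolding mart_def by simp
  then have "(\<integral>\<omega>. (mart m (Suc n) \<omega>)\<^sup>2 \<partial>M)
      = (\<integral>\<omega>. (mart m n \<omega>)\<^sup>2 + (2 * (mart m n \<omega> * mart_diff n \<omega>) + (mart_diff n \<omega>)\<^sup>2) \<partial>M)"
    by (simp add: power2_eq_square algebra_simps)
  also have "\<dots> = (\<integral>\<omega>. (mart m n \<omega>)\<^sup>2 \<partial>M) + (2 * (\<integral>\<omega>. mart m n \<omega> * mart_diff n \<omega> \<partial>M)
      + (\<integral>\<omega>. (mart_diff n \<omega>)\<^sup>2 \<partial>M))"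
  proof -
    have "integrable M (\<lambda>\<omega>. mart m n \<omega> * mart_diff n \<omega>)"
      "integrable M (\<lambda>\<omega>. mart_diff n \<omega> * mart_diff n \<omega>)"
      using abs_mart_le abs_mart_diff_le by (auto intro!: integrable_bounded_mult)
    then show ?thesis using integrable_mart_sq[of m n] by (simp add: power2_eq_square)
  qed
  also have "(\<integral>\<omega>. mart m n \<omega> * mart_diff n \<omega> \<partial>M) = 0"
    using abs_mart_le by (intro integral_mult_mart_diff[OF mart_measurable_F]) auto
  finally show ?case using step by simp
qed

lemma integral_indicator_mart_sq_mono:
  assumes "m \<le> k" "k \<le> n" and B: "B \<in> sets (F k)"
  shows "(\<integral>\<omega>. indicator B \<omega> * (mart m k \<omega>)\<^sup>2 \<partial>M) \<le> (\<integral>\<omega>. indicator B \<omega> * (mart m n \<omega>)\<^sup>2 \<partial>M)"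
proof -
  have [measurable]: "B \<in> sets M" using sets_F_imp_M[OF B] .
  have Z: "(\<lambda>\<omega>. indicator B \<omega> * mart m k \<omega>) \<in> borel_measurable (F k)"
    using mart_measurable_F[of m k] B by measurable
  have Zb: "\<bar>indicator B \<omega> * mart m k \<omega>\<bar> \<le> 2 * real k" if "\<omega> \<in> space M" for \<omega>
    using abs_mart_le[OF that, of m k] by (auto simp: indicator_def)
  have "indicator B \<omega> * (mart m n \<omega>)\<^sup>2 = indicator B \<omega> * (mart m k \<omega>)\<^sup>2
      + (2 * (indicator B \<omega> * mart m k \<omega> * mart k n \<omega>) + indicator B \<omega> * (mart k n \<omega>)\<^sup>2)" for \<omega>
    using mart_split[OF assms(1,2), of \<omega>] by (simp add: power2_eq_square algebra_simps)
  moreover have "integrable M (\<lambda>\<omega>. indicator B \<omega> * mart m k \<omega> * mart k n \<omega>)"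
    by (rule integrable_bounded_mult[OF measurable_F_imp_M[OF Z] Zb mart_measurable abs_mart_le])
  moreover have "integrable M (\<lambda>\<omega>. indicator B \<omega> * (mart j n \<omega>)\<^sup>2)" for j n
    by (intro integrable_indicator_mult_mart_sq) simp
  ultimately have "(\<integral>\<omega>. indicator B \<omega> * (mart m n \<omega>)\<^sup>2 \<partial>M)
      = (\<integral>\<omega>. indicator B \<omega> * (mart m k \<omega>)\<^sup>2 \<partial>M)
        + (2 * (\<integral>\<omega>. indicator B \<omega> * mart m k \<omega> * mart k n \<omega> \<partial>M)
           + (\<integral>\<omega>. indicator B \<omega> * (mart k n \<omega>)\<^sup>2 \<partial>M))"
    by simp
  moreover have "(\<integral>\<omega>. indicator B \<omega> * mart m k \<omega> * mart k n \<omega> \<partial>M) = 0"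
    by (rule integral_mult_mart[OF Z Zb \<open>k \<le> n\<close>])
  moreover have "0 \<le> (\<integral>\<omega>. indicator B \<omega> * (mart k n \<omega>)\<^sup>2 \<partial>M)"
    by (rule integral_nonneg_AE) auto
  ultimately show ?thesis by simp
qed

definition first_exit :: "real \<Rightarrow> nat \<Rightarrow> nat \<Rightarrow> 'w set"
  where "first_exit \<epsilon> m k = {\<omega> \<in> space M. \<epsilon> \<le> \<bar>mart m k \<omega>\<bar> \<and> (\<forall>j\<in>{m..<k}. \<bar>mart m j \<omega>\<bar> < \<epsilon>)}"

lemma first_exit_sets_F: "first_exit \<epsilon> m k \<in> sets (F k)"
proof -
  have [measurable]: "mart m j \<in> borel_measurable (F k)" if "j \<le> k" for j
    using measurable_F_mono[OF that mart_measurable_F] .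
  have [measurable]: "Measurable.pred (F k) (\<lambda>\<omega>. \<forall>j\<in>{m..<k}. \<bar>mart m j \<omega>\<bar> < \<epsilon>)"
    by (rule pred_intros_finite(3)) auto
  show ?thesis unfolding first_exit_def by measurable
qed

lemma first_exit_sets [measurable]: "first_exit \<epsilon> m k \<in> sets M"
  by (rule sets_F_imp_M[OF first_exit_sets_F])

lemma disjoint_family_on_first_exit: "disjoint_family_on (first_exit \<epsilon> m) {m..}"
  unfolding disjoint_family_on_def first_exit_def
  by (auto simp: linorder_neq_iff) (meson atLeastLessThan_iff not_le)+

lemma exceed_eq_Union_first_exit:
  "{\<omega> \<in> space M. \<exists>k\<in>{m..n}. \<epsilon> \<le> \<bar>mart m k \<omega>\<bar>} = (\<Union>k\<in>{m..n}. first_exit \<epsilon> m k)"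
proof (intro equalityI subsetI)
  fix \<omega> assume \<omega>: "\<omega> \<in> {\<omega> \<in> space M. \<exists>k\<in>{m..n}. \<epsilon> \<le> \<bar>mart m k \<omega>\<bar>}"
  define P where "P k \<longleftrightarrow> k \<in> {m..n} \<and> \<epsilon> \<le> \<bar>mart m k \<omega>\<bar>" for k
  define k where "k = (LEAST k. P k)"
  have "P k" unfolding k_def by (rule LeastI_ex) (use \<omega> P_def in auto)
  then have k: "k \<in> {m..n}" "\<epsilon> \<le> \<bar>mart m k \<omega>\<bar>" unfolding P_def by auto
  have "\<not> P j" if "j < k" for j using that unfolding k_def by (rule not_less_Least)
  then have "\<bar>mart m j \<omega>\<bar> < \<epsilon>" if "j \<in> {m..<k}" for j
    using that k unfolding P_def by fastforce
  then show "\<omega> \<in> (\<Union>k\<in>{m..n}. first_exit \<epsilon> m k)"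
    using \<omega> k unfolding first_exit_def by auto
qed (auto simp: first_exit_def)

lemma kolmogorov_maximal_inequality:
  assumes "0 < \<epsilon>" "m \<le> n"
  shows "\<epsilon>\<^sup>2 * prob {\<omega> \<in> space M. \<exists>k\<in>{m..n}. \<epsilon> \<le> \<bar>mart m k \<omega>\<bar>} \<le> (\<integral>\<omega>. (mart m n \<omega>)\<^sup>2 \<partial>M)"
proof -
  let ?E = "first_exit \<epsilon> m"
  have disj: "disjoint_family_on ?E {m..n}"
    using disjoint_family_on_first_exit by (rule disjoint_family_on_mono[rotated]) auto
  have "\<epsilon>\<^sup>2 * prob (?E k) \<le> (\<integral>\<omega>. indicator (?E k) \<omega> * (mart m n \<omega>)\<^sup>2 \<partial>M)" if "k \<in> {m..n}" for k
  proof -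
    have "\<epsilon>\<^sup>2 * prob (?E k) = (\<integral>\<omega>. indicator (?E k) \<omega> * \<epsilon>\<^sup>2 \<partial>M)" by simp
    also have "\<dots> \<le> (\<integral>\<omega>. indicator (?E k) \<omega> * (mart m k \<omega>)\<^sup>2 \<partial>M)"
    proof (rule integral_mono)
      show "integrable M (\<lambda>\<omega>. indicator (?E k) \<omega> * \<epsilon>\<^sup>2)"
        using integrable_real_mult_indicator[OF _ integrable_const] by (simp add: mult.commute)
      show "integrable M (\<lambda>\<omega>. indicator (?E k) \<omega> * (mart m k \<omega>)\<^sup>2)"
        by (intro integrable_indicator_mult_mart_sq) simp
      show "indicator (?E k) \<omega> * \<epsilon>\<^sup>2 \<le> indicator (?E k) \<omega> * (mart m k \<omega>)\<^sup>2" for \<omega>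
        using \<open>0 < \<epsilon>\<close> by (auto simp: first_exit_def indicator_def simp flip: abs_le_square_iff)
    qed
    also have "\<dots> \<le> (\<integral>\<omega>. indicator (?E k) \<omega> * (mart m n \<omega>)\<^sup>2 \<partial>M)"
      using that by (intro integral_indicator_mart_sq_mono first_exit_sets_F) auto
    finally show ?thesis .
  qed
  then have "\<epsilon>\<^sup>2 * (\<Sum>k\<in>{m..n}. prob (?E k)) \<le> (\<Sum>k\<in>{m..n}. (\<integral>\<omega>. indicator (?E k) \<omega> * (mart m n \<omega>)\<^sup>2 \<partial>M))"
    unfolding sum_distrib_left by (intro sum_mono)
  also have "\<dots> = (\<integral>\<omega>. (\<Sum>k\<in>{m..n}. indicator (?E k) \<omega> * (mart m n \<omega>)\<^sup>2) \<partial>M)"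
    by (intro Bochner_Integration.integral_sum[symmetric] integrable_indicator_mult_mart_sq) simp
  also have "\<dots> = (\<integral>\<omega>. indicator (\<Union>k\<in>{m..n}. ?E k) \<omega> * (mart m n \<omega>)\<^sup>2 \<partial>M)"
    by (simp add: indicator_UN_disjoint[OF _ disj] sum_distrib_right)
  also have "\<dots> \<le> (\<integral>\<omega>. (mart m n \<omega>)\<^sup>2 \<partial>M)"
  proof (rule integral_mono)
    have "(\<Union>k\<in>{m..n}. ?E k) \<in> sets M" by (intro sets.finite_UN) auto
    then show "integrable M (\<lambda>\<omega>. indicator (\<Union>k\<in>{m..n}. ?E k) \<omega> * (mart m n \<omega>)\<^sup>2)"
      by (rule integrable_indicator_mult_mart_sq)
  qed (use integrable_mart_sq in \<open>auto simp: indicator_def\<close>)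
  moreover have "prob (\<Union>k\<in>{m..n}. ?E k) = (\<Sum>k\<in>{m..n}. prob (?E k))"
    using disj by (intro measure_finite_Union) (auto simp: emeasure_eq_measure)
  ultimately show ?thesis unfolding exceed_eq_Union_first_exit by simp
qed

lemma integral_mart_diff_sq_le:
  "(\<integral>\<omega>. (mart_diff t \<omega>)\<^sup>2 \<partial>M) \<le> (\<integral>\<omega>. (V (Suc t) \<omega>)\<^sup>2 \<partial>M) - (\<integral>\<omega>. (V t \<omega>)\<^sup>2 \<partial>M)"
proof -
  have range: "\<bar>V s \<omega>\<bar> \<le> 1" if "\<omega> \<in> space M" for s \<omega> using range_V[OF that, of s] by auto
  have drift: "\<bar>drift t \<omega>\<bar> \<le> 1" for \<omega> using drift_bounds[of t \<omega>] by auto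
  have i: "integrable M (\<lambda>\<omega>. drift t \<omega> * drift t \<omega>)" "integrable M (\<lambda>\<omega>. drift t \<omega> * increment t \<omega>)"
    "integrable M (\<lambda>\<omega>. increment t \<omega> * increment t \<omega>)" "integrable M (\<lambda>\<omega>. V t \<omega> * increment t \<omega>)"
    "integrable M (\<lambda>\<omega>. V s \<omega> * V s \<omega>)" for s
    using drift abs_increment_le range by (auto intro!: integrable_bounded_mult)
  have "(\<integral>\<omega>. drift t \<omega> * drift t \<omega> \<partial>M) = (\<integral>\<omega>. drift t \<omega> * increment t \<omega> \<partial>M)"
    using drift by (intro integral_mult_drift drift_measurable_F)
  then have "(\<integral>\<omega>. (mart_diff t \<omega>)\<^sup>2 \<partial>M)
      = (\<integral>\<omega>. increment t \<omega> * increment t \<omega> \<partial>M) - (\<integral>\<omega>. drift t \<omega> * drift t \<omega> \<partial>M)"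
    unfolding mart_diff_def power2_eq_square using i by (simp add: algebra_simps)
  also have "\<dots> \<le> (\<integral>\<omega>. increment t \<omega> * increment t \<omega> \<partial>M)"
    by (simp add: integral_nonneg_AE)
  also have "\<dots> = (\<integral>\<omega>. V (Suc t) \<omega> * V (Suc t) \<omega> - V t \<omega> * V t \<omega> - 2 * (V t \<omega> * increment t \<omega>) \<partial>M)"
    by (rule Bochner_Integration.integral_cong) (auto simp: increment_def algebra_simps)
  also have "\<dots> = (\<integral>\<omega>. V (Suc t) \<omega> * V (Suc t) \<omega> \<partial>M) - (\<integral>\<omega>. V t \<omega> * V t \<omega> \<partial>M)
      - 2 * (\<integral>\<omega>. V t \<omega> * increment t \<omega> \<partial>M)"
    using i by simp
  also have "\<dots> \<le> (\<integral>\<omega>. V (Suc t) \<omega> * V (Suc t) \<omega> \<partial>M) - (\<integral>\<omega>. V t \<omega> * V t \<omega> \<partial>M)"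
    using submartingale[OF adapted range_V] unfolding increment_def by simp
  finally show ?thesis by (simp add: power2_eq_square)
qed

lemma summable_integral_mart_diff_sq: "summable (\<lambda>t. \<integral>\<omega>. (mart_diff t \<omega>)\<^sup>2 \<partial>M)"
proof (rule summableI_nonneg_bounded)
  fix n
  have "(\<Sum>t<n. \<integral>\<omega>. (mart_diff t \<omega>)\<^sup>2 \<partial>M)
      \<le> (\<Sum>t<n. (\<integral>\<omega>. (V (Suc t) \<omega>)\<^sup>2 \<partial>M) - (\<integral>\<omega>. (V t \<omega>)\<^sup>2 \<partial>M))"
    by (intro sum_mono integral_mart_diff_sq_le)
  also have "\<dots> = (\<integral>\<omega>. (V n \<omega>)\<^sup>2 \<partial>M) - (\<integral>\<omega>. (V 0 \<omega>)\<^sup>2 \<partial>M)"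
    by (rule sum_lessThan_telescope)
  also have "\<dots> \<le> 1"
  proof -
    have "(\<integral>\<omega>. (V n \<omega>)\<^sup>2 \<partial>M) \<le> (\<integral>\<omega>. 1 \<partial>M)"
      using range_V by (intro integral_mono integrable_bounded[where B=1]) (auto intro: power_le_one)
    moreover have "0 \<le> (\<integral>\<omega>. (V 0 \<omega>)\<^sup>2 \<partial>M)" by (rule integral_nonneg_AE) auto
    moreover have "(\<integral>\<omega>. 1 \<partial>M) = (1 :: real)" using prob_space by simp
    ultimately show ?thesis by linarith
  qed
  finally show "(\<Sum>t<n. \<integral>\<omega>. (mart_diff t \<omega>)\<^sup>2 \<partial>M) \<le> 1" .
qed (rule integral_nonneg_AE, auto)

lemma prob_exceed_le_tail:
  assumes "0 < \<epsilon>"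
  shows "prob {\<omega> \<in> space M. \<exists>k\<ge>m. \<epsilon> \<le> \<bar>mart m k \<omega>\<bar>}
           \<le> (\<Sum>i. \<integral>\<omega>. (mart_diff (i + m) \<omega>)\<^sup>2 \<partial>M) / \<epsilon>\<^sup>2"
proof -
  define E where "E n = {\<omega> \<in> space M. \<exists>k\<in>{m..m + n}. \<epsilon> \<le> \<bar>mart m k \<omega>\<bar>}" for n
  have "E n \<in> sets M" for n unfolding E_def by measurable
  then have E_sets: "range E \<subseteq> sets M" by auto
  have "incseq E" unfolding E_def incseq_def by force
  have E_Union: "(\<Union>n. E n) = {\<omega> \<in> space M. \<exists>k\<ge>m. \<epsilon> \<le> \<bar>mart m k \<omega>\<bar>}"
  proof (intro equalityI subsetI)
    fix \<omega> assume "\<omega> \<in> {\<omega> \<in> space M. \<exists>k\<ge>m. \<epsilon> \<le> \<bar>mart m k \<omega>\<bar>}"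
    then obtain k where "\<omega> \<in> space M" "m \<le> k" "\<epsilon> \<le> \<bar>mart m k \<omega>\<bar>" by auto
    then have "\<omega> \<in> E (k - m)" unfolding E_def by auto
    then show "\<omega> \<in> (\<Union>n. E n)" by auto
  qed (auto simp: E_def)
  have "prob (E n) \<le> (\<Sum>i. \<integral>\<omega>. (mart_diff (i + m) \<omega>)\<^sup>2 \<partial>M) / \<epsilon>\<^sup>2" for n
  proof -
    have "\<epsilon>\<^sup>2 * prob (E n) \<le> (\<integral>\<omega>. (mart m (m + n) \<omega>)\<^sup>2 \<partial>M)"
      unfolding E_def using assms by (intro kolmogorov_maximal_inequality) auto
    also have "\<dots> = (\<Sum>i<n. \<integral>\<omega>. (mart_diff (i + m) \<omega>)\<^sup>2 \<partial>M)"
      by (simp add: integral_mart_sq sum.atLeastLessThan_shift_0[of _ m] atLeast0LessThan add.commute)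
    also have "\<dots> \<le> (\<Sum>i. \<integral>\<omega>. (mart_diff (i + m) \<omega>)\<^sup>2 \<partial>M)"
      using summable_iff_shift[THEN iffD2, OF summable_integral_mart_diff_sq]
      by (rule sum_le_suminf) (auto intro: integral_nonneg_AE)
    finally show ?thesis using assms by (simp add: pos_le_divide_eq mult.commute)
  qed
  moreover have "(\<lambda>n. prob (E n)) \<longlonglongrightarrow> prob (\<Union>n. E n)"
    by (rule finite_Lim_measure_incseq[OF E_sets \<open>incseq E\<close>])
  ultimately show ?thesis
    unfolding E_Union[symmetric] by (intro LIMSEQ_le_const2) auto
qed

lemma AE_eventually_mart_small:
  assumes "0 < \<epsilon>"
  shows "AE \<omega> in M. \<exists>m. \<forall>k\<ge>m. \<bar>mart m k \<omega>\<bar> < \<epsilon>"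
proof -
  define S where "S = {\<omega> \<in> space M. \<forall>m. \<exists>k\<ge>m. \<epsilon> \<le> \<bar>mart m k \<omega>\<bar>}"
  have S[measurable]: "S \<in> sets M" unfolding S_def by measurable
  have "prob S \<le> (\<Sum>i. \<integral>\<omega>. (mart_diff (i + m) \<omega>)\<^sup>2 \<partial>M) / \<epsilon>\<^sup>2" for m
  proof -
    have "prob S \<le> prob {\<omega> \<in> space M. \<exists>k\<ge>m. \<epsilon> \<le> \<bar>mart m k \<omega>\<bar>}"
      by (intro finite_measure_mono) (auto simp: S_def)
    also have "\<dots> \<le> (\<Sum>i. \<integral>\<omega>. (mart_diff (i + m) \<omega>)\<^sup>2 \<partial>M) / \<epsilon>\<^sup>2"
      by (rule prob_exceed_le_tail[OF assms])
    finally show ?thesis .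
  qed
  moreover have "(\<lambda>m. (\<Sum>i. \<integral>\<omega>. (mart_diff (i + m) \<omega>)\<^sup>2 \<partial>M) / \<epsilon>\<^sup>2) \<longlonglongrightarrow> 0"
    by (intro tendsto_divide_zero suminf_exist_split2 summable_integral_mart_diff_sq)
  ultimately have "prob S \<le> 0" by (intro LIMSEQ_le_const) auto
  then have "emeasure M S = 0" by (simp add: emeasure_eq_measure measure_nonneg antisym)
  then show ?thesis
    by (intro AE_I[OF _ _ S]) (auto simp: S_def not_less)
qed

lemma V_eq_mart_add_drift: "V n \<omega> = V 0 \<omega> + mart 0 n \<omega> + (\<Sum>s<n. drift s \<omega>)"
proof -
  have "V n \<omega> - V 0 \<omega> = (\<Sum>s<n. increment s \<omega>)"
    unfolding increment_def by (rule sum_lessThan_telescope[symmetric])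
  then show ?thesis unfolding mart_def mart_diff_def by (simp add: sum_subtractf atLeast0LessThan)
qed

lemma Cauchy_mart:
  assumes "\<forall>j. \<exists>m. \<forall>k\<ge>m. \<bar>mart m k \<omega>\<bar> < inverse (real (Suc j))"
  shows "Cauchy (\<lambda>n. mart 0 n \<omega>)"
  unfolding Cauchy_altdef2
proof (intro allI impI)
  fix e :: real assume "0 < e"
  then obtain j where j: "inverse (real (Suc j)) < e" using reals_Archimedean by blast
  obtain m where m: "\<forall>k\<ge>m. \<bar>mart m k \<omega>\<bar> < inverse (real (Suc j))" using assms by blast
  have "dist (mart 0 k \<omega>) (mart 0 m \<omega>) < e" if "m \<le> k" for k
  proof -
    have "dist (mart 0 k \<omega>) (mart 0 m \<omega>) = \<bar>mart m k \<omega>\<bar>"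
      using mart_split[of 0 m k \<omega>] that by (simp add: dist_real_def)
    then show ?thesis using m that j by auto
  qed
  then show "\<exists>m. \<forall>k\<ge>m. dist (mart 0 k \<omega>) (mart 0 m \<omega>) < e" by blast
qed

theorem AE_convergent: "AE \<omega> in M. convergent (\<lambda>t. V t \<omega>)"
proof -
  have "AE \<omega> in M. \<forall>j. \<exists>m. \<forall>k\<ge>m. \<bar>mart m k \<omega>\<bar> < inverse (real (Suc j))"
    by (subst AE_all_countable) (intro allI AE_eventually_mart_small, simp)
  then show ?thesis
  proof (rule AE_mp, intro AE_I2 impI)
    fix \<omega> assume \<omega>: "\<omega> \<in> space M" and "\<forall>j. \<exists>m. \<forall>k\<ge>m. \<bar>mart m k \<omega>\<bar> < inverse (real (Suc j))"
    then have mart: "convergent (\<lambda>n. mart 0 n \<omega>)" by (intro Cauchy_convergent Cauchy_mart)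
    then obtain K where K: "\<And>n. \<bar>mart 0 n \<omega>\<bar> \<le> K"
      using convergent_imp_Bseq[OF mart] unfolding Bseq_def by (metis real_norm_def less_imp_le)
    have "incseq (\<lambda>n. \<Sum>s<n. drift s \<omega>)" by (rule incseq_SucI) (simp add: drift_bounds)
    moreover have "(\<Sum>s<n. drift s \<omega>) \<le> 1 + K" for n
      using V_eq_mart_add_drift[of n \<omega>] range_V[OF \<omega>, of n] range_V[OF \<omega>, of 0] K[of n] by auto
    ultimately obtain L where "(\<lambda>n. \<Sum>s<n. drift s \<omega>) \<longlonglongrightarrow> L"
      using incseq_convergent by blast
    then have "convergent (\<lambda>n. \<Sum>s<n. drift s \<omega>)" by (auto simp: convergent_def)
    then have "convergent (\<lambda>n. V 0 \<omega> + mart 0 n \<omega> + (\<Sum>s<n. drift s \<omega>))"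
      by (intro convergent_add convergent_const mart)
    then show "convergent (\<lambda>n. V n \<omega>)" by (simp only: V_eq_mart_add_drift[symmetric])
  qed
qed

end

section \<open>The observed-reward update is a submartingale\<close>

locale observed_reward_pg = filtered_prob_space M F for M :: "'w measure" and F +
  fixes A :: "nat \<Rightarrow> 'w \<Rightarrow> 'a::finite" and X :: "nat \<Rightarrow> 'w \<Rightarrow> real"
    and \<theta> :: "nat \<Rightarrow> 'w \<Rightarrow> 'a \<Rightarrow> real" and r :: "'a \<Rightarrow> real"
    and R :: "'a \<Rightarrow> real measure" and Rmax :: real
  assumes r_range: "\<And>a. r a \<in> {0..1}"
    and Rmax_pos: "0 < Rmax"
    and prob_space_R: "\<And>a. prob_space (R a)"
    and sets_R: "\<And>a. sets (R a) = sets borel"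
    and support_R: "\<And>a. AE x in R a. x \<in> {- Rmax..Rmax}"
    and mean_R: "\<And>a. (\<integral>x. x \<partial>R a) = r a"
    and A_measurable_F: "\<And>t. A t \<in> measurable (F (Suc t)) (count_space UNIV)"
    and X_measurable_F: "\<And>t. X t \<in> borel_measurable (F (Suc t))"
    and \<theta>0_measurable_F: "\<And>a. (\<lambda>\<omega>. \<theta> 0 \<omega> a) \<in> borel_measurable (F 0)"
    and sampling: "\<And>t a g. g \<in> borel_measurable borel \<Longrightarrow> bounded (range g) \<Longrightarrow>
      AE \<omega> in M. real_cond_exp M (F t) (\<lambda>\<omega>. indicator {\<omega> \<in> space M. A t \<omega> = a} \<omega> * g (X t \<omega>)) \<omega>
        = softmax (\<theta> t \<omega>) a * (\<integral>x. g x \<partial>R a)"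
    and update: "\<And>t \<omega>. \<omega> \<in> space M \<Longrightarrow> \<theta> (Suc t) \<omega> =
      (\<lambda>a. \<theta> t \<omega> a + eta_obs (\<theta> t \<omega>) r Rmax (A t \<omega>)
             * (rhat_obs (\<theta> t \<omega>) (X t \<omega>) (A t \<omega>) a - baseline (\<theta> t \<omega>) r (A t \<omega>) a))"
begin

lemma borel_measurable_R: "(f :: real \<Rightarrow> real) \<in> borel_measurable borel \<Longrightarrow> f \<in> borel_measurable (R a)"
  by (subst measurable_cong_sets[OF sets_R refl])

lemma A_measurable [measurable]: "A t \<in> measurable M (count_space UNIV)"
  by (rule measurable_F_imp_M[OF A_measurable_F])

lemma X_measurable [measurable]: "X t \<in> borel_measurable M"
  by (rule measurable_F_imp_M[OF X_measurable_F])

lemma \<theta>_measurable_F: "(\<lambda>\<omega>. \<theta> t \<omega> a) \<in> borel_measurable (F t)"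
proof (induction t arbitrary: a)
  case 0
  then show ?case by (rule \<theta>0_measurable_F)
next
  case (Suc t)
  have [measurable]: "(\<lambda>\<omega>. \<theta> t \<omega> b) \<in> borel_measurable (F (Suc t))" for b
    using measurable_F_mono[OF _ Suc.IH] by simp
  have [measurable]: "X t \<in> borel_measurable (F (Suc t))" by (rule X_measurable_F)
  define f where "f b \<omega> = \<theta> t \<omega> a + eta_obs (\<theta> t \<omega>) r Rmax b
    * (rhat_obs (\<theta> t \<omega>) (X t \<omega>) b a - baseline (\<theta> t \<omega>) r b a)" for b \<omega>
  have "(\<lambda>\<omega>. f (A t \<omega>) \<omega>) \<in> borel_measurable (F (Suc t))"
  proof (rule measurable_compose_countable'[where I=UNIV and f=f and g="A t"])
    fix b :: 'a
    show "(\<lambda>\<omega>. f b \<omega>) \<in> borel_measurable (F (Suc t))"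
      unfolding f_def eta_obs_def rhat_obs_def baseline_def softmax_def exp_reward_def by measurable
  qed (simp_all add: A_measurable_F)
  moreover have "(\<lambda>\<omega>. \<theta> (Suc t) \<omega> a) \<in> borel_measurable (F (Suc t))
      \<longleftrightarrow> (\<lambda>\<omega>. f (A t \<omega>) \<omega>) \<in> borel_measurable (F (Suc t))"
    by (rule measurable_cong) (simp add: update space_F f_def)
  ultimately show ?case by simp
qed

lemma exp_reward_measurable_F: "(\<lambda>\<omega>. exp_reward (softmax (\<theta> t \<omega>)) r) \<in> borel_measurable (F t)"
  using \<theta>_measurable_F[of t] unfolding softmax_def exp_reward_def by measurable

lemma softmax_measurable [measurable]: "(\<lambda>\<omega>. softmax (\<theta> t \<omega>) a) \<in> borel_measurable M"
  using measurable_F_imp_M[OF \<theta>_measurable_F[of t]] unfolding softmax_def by measurable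

lemma integral_mult_action_reward:
  assumes Z: "Z \<in> borel_measurable (F t)" "\<And>\<omega>. \<omega> \<in> space M \<Longrightarrow> \<bar>Z \<omega>\<bar> \<le> B"
    and g: "g \<in> borel_measurable borel" "\<And>x. \<bar>g x\<bar> \<le> C"
  shows "(\<integral>\<omega>. Z \<omega> * (indicator {\<omega> \<in> space M. A t \<omega> = a} \<omega> * g (X t \<omega>)) \<partial>M)
       = (\<integral>\<omega>. Z \<omega> * (softmax (\<theta> t \<omega>) a * (\<integral>x. g x \<partial>R a)) \<partial>M)"
proof -
  have [measurable]: "Z \<in> borel_measurable M" "g \<in> borel_measurable borel"
    using measurable_F_imp_M[OF Z(1)] g(1) .
  have "bounded (range g)" using g(2) unfolding bounded_iff by auto
  then have "AE \<omega> in M. Z \<omega> * real_cond_exp M (F t) (\<lambda>\<omega>. indicator {\<omega> \<in> space M. A t \<omega> = a} \<omega> * g (X t \<omega>)) \<omega>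
      = Z \<omega> * (softmax (\<theta> t \<omega>) a * (\<integral>x. g x \<partial>R a))"
    using sampling[OF g(1) \<open>bounded (range g)\<close>, of t a] by (auto elim: eventually_mono)
  then have "(\<integral>\<omega>. Z \<omega> * real_cond_exp M (F t) (\<lambda>\<omega>. indicator {\<omega> \<in> space M. A t \<omega> = a} \<omega> * g (X t \<omega>)) \<omega> \<partial>M)
      = (\<integral>\<omega>. Z \<omega> * (softmax (\<theta> t \<omega>) a * (\<integral>x. g x \<partial>R a)) \<partial>M)"
    by (intro integral_cong_AE) auto
  moreover have "(\<integral>\<omega>. Z \<omega> * real_cond_exp M (F t) (\<lambda>\<omega>. indicator {\<omega> \<in> space M. A t \<omega> = a} \<omega> * g (X t \<omega>)) \<omega> \<partial>M)
      = (\<integral>\<omega>. Z \<omega> * (indicator {\<omega> \<in> space M. A t \<omega> = a} \<omega> * g (X t \<omega>)) \<partial>M)"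
    using Z g(2) order_trans[OF abs_ge_zero g(2)]
    by (intro integral_mult_cond_exp[where C=C]) (auto simp: indicator_def)
  ultimately show ?thesis by simp
qed

lemma AE_X_in_support: "AE \<omega> in M. X t \<omega> \<in> {- Rmax..Rmax}"
proof -
  define g :: "real \<Rightarrow> real" where "g = indicator {x. Rmax < \<bar>x\<bar>}"
  have g[measurable]: "g \<in> borel_measurable borel" unfolding g_def by measurable
  have "AE \<omega> in M. indicator {\<omega> \<in> space M. A t \<omega> = a} \<omega> * g (X t \<omega>) = 0" for a
  proof -
    have "AE x in R a. g x = 0"
      using support_R[of a] by eventually_elim (auto simp: g_def indicator_def)
    then have "(\<integral>x. g x \<partial>R a) = 0" by (rule integral_eq_zero_AE)
    then have "(\<integral>\<omega>. indicator {\<omega> \<in> space M. A t \<omega> = a} \<omega> * g (X t \<omega>) \<partial>M) = 0"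
      using integral_mult_action_reward[of "\<lambda>_. 1" t 1 g 1 a] by (simp add: g_def indicator_def)
    moreover have "integrable M (\<lambda>\<omega>. indicator {\<omega> \<in> space M. A t \<omega> = a} \<omega> * g (X t \<omega>))"
      by (rule integrable_bounded[where B=1]) (auto simp: g_def indicator_def)
    ultimately show ?thesis
      by (subst integral_nonneg_eq_0_iff_AE[symmetric]) (auto simp: g_def indicator_def)
  qed
  then have "AE \<omega> in M. \<forall>a\<in>UNIV. indicator {\<omega> \<in> space M. A t \<omega> = a} \<omega> * g (X t \<omega>) = 0"
    by (intro AE_finite_allI) auto
  then show ?thesis
    using AE_space by eventually_elim (auto simp: g_def indicator_def split: if_splits)
qed

lemma integrable_R:
  fixes g :: "real \<Rightarrow> real"
  assumes "g \<in> borel_measurable borel" "\<And>x. \<bar>g x\<bar> \<le> C"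
  shows "integrable (R a) g"
proof -
  interpret Ra: prob_space "R a" by (rule prob_space_R)
  show ?thesis using assms by (intro Ra.integrable_bounded borel_measurable_R) auto
qed

lemma abs_integral_R_le:
  fixes g :: "real \<Rightarrow> real"
  assumes "g \<in> borel_measurable borel" "\<And>x. \<bar>g x\<bar> \<le> C"
  shows "\<bar>\<integral>x. g x \<partial>R a\<bar> \<le> C"
proof -
  interpret Ra: prob_space "R a" by (rule prob_space_R)
  have "\<bar>\<integral>x. g x \<partial>R a\<bar> \<le> (\<integral>x. \<bar>g x\<bar> \<partial>R a)" by (rule integral_abs_bound)
  also have "\<dots> \<le> C"
    using assms integrable_R[OF assms] by (intro Ra.integral_le_const) auto
  finally show ?thesis .
qed

lemma r_le_Rmax: "r a \<le> Rmax"
proof -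
  interpret Ra: prob_space "R a" by (rule prob_space_R)
  have "integrable (R a) (\<lambda>x. x)"
    using support_R[of a] borel_measurable_R[of "\<lambda>x. x"]
    by (intro Ra.integrable_const_bound[where B=Rmax]) (auto elim: eventually_mono)
  then show ?thesis
    unfolding mean_R[symmetric] using support_R[of a] by (intro Ra.integral_le_const) (auto elim: eventually_mono)
qed

text \<open>Clipping the reward to its support makes its powers bounded test functions for \<open>sampling\<close>.\<close>
definition clip :: "real \<Rightarrow> real"
  where "clip x = max (- Rmax) (min Rmax x)"

lemma clip_measurable [measurable]: "clip \<in> borel_measurable borel"
  unfolding clip_def by measurable

lemma abs_clip_le: "\<bar>clip x\<bar> \<le> Rmax"
  unfolding clip_def using Rmax_pos by auto

lemma clip_eq: "x \<in> {- Rmax..Rmax} \<Longrightarrow> clip x = x"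
  unfolding clip_def by auto

lemma integral_poly_action_reward:
  fixes Z :: "'a \<Rightarrow> nat \<Rightarrow> 'w \<Rightarrow> real" and g :: "nat \<Rightarrow> real \<Rightarrow> real"
  assumes Z: "\<And>a j. Z a j \<in> borel_measurable (F t)" "\<And>a j \<omega>. \<omega> \<in> space M \<Longrightarrow> \<bar>Z a j \<omega>\<bar> \<le> B"
    and g: "\<And>j. g j \<in> borel_measurable borel" "\<And>j x. j < n \<Longrightarrow> \<bar>g j x\<bar> \<le> C"
  shows "integrable M (\<lambda>\<omega>. \<Sum>j<n. Z (A t \<omega>) j \<omega> * g j (X t \<omega>))"
    and "(\<integral>\<omega>. (\<Sum>j<n. Z (A t \<omega>) j \<omega> * g j (X t \<omega>)) \<partial>M)
           = (\<integral>\<omega>. (\<Sum>a\<in>UNIV. softmax (\<theta> t \<omega>) a * (\<integral>x. (\<Sum>j<n. Z a j \<omega> * g j x) \<partial>R a)) \<partial>M)"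
proof -
  define I :: "'a \<Rightarrow> 'w \<Rightarrow> real" where "I a \<omega> = indicator {\<omega> \<in> space M. A t \<omega> = a} \<omega>" for a \<omega>
  have [measurable]: "Z a j \<in> borel_measurable M" for a j using measurable_F_imp_M[OF Z(1)] .
  have [measurable]: "I a \<in> borel_measurable M" for a unfolding I_def by measurable
  have [measurable]: "g j \<in> borel_measurable borel" for j by (rule g(1))
  have split: "(\<Sum>j<n. Z (A t \<omega>) j \<omega> * g j (X t \<omega>)) = (\<Sum>a\<in>UNIV. \<Sum>j<n. Z a j \<omega> * (I a \<omega> * g j (X t \<omega>)))"
    if "\<omega> \<in> space M" for \<omega>
  proof -
    have "(\<Sum>a\<in>UNIV. \<Sum>j<n. Z a j \<omega> * (I a \<omega> * g j (X t \<omega>)))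
        = (\<Sum>a\<in>UNIV. if A t \<omega> = a then \<Sum>j<n. Z a j \<omega> * g j (X t \<omega>) else 0)"
      using that by (intro sum.cong) (auto simp: I_def)
    then show ?thesis by simp
  qed
  have int_I: "integrable M (\<lambda>\<omega>. Z a j \<omega> * (I a \<omega> * g j (X t \<omega>)))" if "j < n" for a j
    using Z(2) g(2)[OF that] order_trans[OF abs_ge_zero g(2)[OF that]]
    by (intro integrable_bounded_mult) (auto simp: I_def indicator_def)
  have int_\<pi>: "integrable M (\<lambda>\<omega>. Z a j \<omega> * (softmax (\<theta> t \<omega>) a * (\<integral>x. g j x \<partial>R a)))" if "j < n" for a j
  proof (rule integrable_bounded_mult[where C="1 * C"])
    show "\<bar>softmax (\<theta> t \<omega>) a * (\<integral>x. g j x \<partial>R a)\<bar> \<le> 1 * C" for \<omega>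
      using softmax_pos[of "\<theta> t \<omega>" a] softmax_le_1[of "\<theta> t \<omega>" a]
      by (intro abs_mult_le abs_integral_R_le[OF g(1) g(2)[OF that]]) auto
  qed (use Z(2) in auto)
  show "integrable M (\<lambda>\<omega>. \<Sum>j<n. Z (A t \<omega>) j \<omega> * g j (X t \<omega>))"
    using int_I by (subst Bochner_Integration.integrable_cong[OF refl split]) (auto intro!: Bochner_Integration.integrable_sum)
  have "(\<integral>\<omega>. (\<Sum>j<n. Z (A t \<omega>) j \<omega> * g j (X t \<omega>)) \<partial>M)
      = (\<integral>\<omega>. (\<Sum>a\<in>UNIV. \<Sum>j<n. Z a j \<omega> * (I a \<omega> * g j (X t \<omega>))) \<partial>M)"
    by (intro Bochner_Integration.integral_cong refl split)
  also have "\<dots> = (\<Sum>a\<in>UNIV. \<Sum>j<n. \<integral>\<omega>. Z a j \<omega> * (I a \<omega> * g j (X t \<omega>)) \<partial>M)"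
    using int_I by (intro integral_sum_sum) auto
  also have "\<dots> = (\<Sum>a\<in>UNIV. \<Sum>j<n. \<integral>\<omega>. Z a j \<omega> * (softmax (\<theta> t \<omega>) a * (\<integral>x. g j x \<partial>R a)) \<partial>M)"
    unfolding I_def using Z g by (intro sum.cong refl integral_mult_action_reward) auto
  also have "\<dots> = (\<integral>\<omega>. (\<Sum>a\<in>UNIV. \<Sum>j<n. Z a j \<omega> * (softmax (\<theta> t \<omega>) a * (\<integral>x. g j x \<partial>R a))) \<partial>M)"
    using int_\<pi> by (intro integral_sum_sum[symmetric]) auto
  also have "\<dots> = (\<integral>\<omega>. (\<Sum>a\<in>UNIV. softmax (\<theta> t \<omega>) a * (\<integral>x. (\<Sum>j<n. Z a j \<omega> * g j x) \<partial>R a)) \<partial>M)"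
  proof (intro Bochner_Integration.integral_cong refl sum.cong)
    fix \<omega> a
    have "(\<integral>x. (\<Sum>j<n. Z a j \<omega> * g j x) \<partial>R a) = (\<Sum>j<n. Z a j \<omega> * (\<integral>x. g j x \<partial>R a))"
      using integrable_R[OF g(1) g(2)] by (simp add: Bochner_Integration.integral_sum)
    then show "(\<Sum>j<n. Z a j \<omega> * (softmax (\<theta> t \<omega>) a * (\<integral>x. g j x \<partial>R a)))
        = softmax (\<theta> t \<omega>) a * (\<integral>x. (\<Sum>j<n. Z a j \<omega> * g j x) \<partial>R a)"
      by (simp add: sum_distrib_left algebra_simps)
  qed
  finally show "(\<integral>\<omega>. (\<Sum>j<n. Z (A t \<omega>) j \<omega> * g j (X t \<omega>)) \<partial>M)
      = (\<integral>\<omega>. (\<Sum>a\<in>UNIV. softmax (\<theta> t \<omega>) a * (\<integral>x. (\<Sum>j<n. Z a j \<omega> * g j x) \<partial>R a)) \<partial>M)" .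
qed

lemma exp_reward_range: "exp_reward (softmax \<theta>') r \<in> {0..1}"
  using r_range by (auto intro: exp_reward_softmax_ge exp_reward_softmax_le)

lemma integral_R_obs_gain_bound_clip_nonneg: "0 \<le> (\<integral>x. obs_gain_bound Rmax \<theta>' r a (clip x) \<partial>R a)"
proof -
  have "AE x in R a. obs_gain_bound Rmax \<theta>' r a (clip x) = obs_gain_bound Rmax \<theta>' r a x"
    using support_R[of a] by eventually_elim (simp add: clip_eq)
  then have "(\<integral>x. obs_gain_bound Rmax \<theta>' r a (clip x) \<partial>R a) = (\<integral>x. obs_gain_bound Rmax \<theta>' r a x \<partial>R a)"
    by (intro integral_cong_AE borel_measurable_R) (auto simp: obs_gain_bound_def Let_def)
  moreover have "AE x in R a. \<bar>x\<bar> \<le> Rmax" using support_R[of a] by eventually_elim auto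
  then have "0 \<le> (\<integral>x. obs_gain_bound Rmax \<theta>' r a x \<partial>R a)"
    using r_range r_le_Rmax by (intro integral_obs_gain_bound_nonneg[OF prob_space_R sets_R _ mean_R Rmax_pos]) auto
  ultimately show ?thesis by simp
qed

lemma integral_mult_obs_gain_bound_nonneg:
  assumes Y: "Y \<in> borel_measurable (F t)" "\<And>\<omega>. \<omega> \<in> space M \<Longrightarrow> Y \<omega> \<in> {0..1}"
  defines "Q \<equiv> \<lambda>\<omega>. Y \<omega> * obs_gain_bound Rmax (\<theta> t \<omega>) r (A t \<omega>) (clip (X t \<omega>))"
  shows "integrable M Q" and "0 \<le> (\<integral>\<omega>. Q \<omega> \<partial>M)"
proof -
  define Z where "Z a j \<omega> = Y \<omega> * obs_gain_coeff Rmax (\<theta> t \<omega>) r a j" for a j \<omega>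
  define G where "G j x = clip x ^ j" for j x
  have [measurable]: "(\<lambda>\<omega>. \<theta> t \<omega> b) \<in> borel_measurable (F t)" for b by (rule \<theta>_measurable_F)
  have Z: "Z a j \<in> borel_measurable (F t)" for a j
    unfolding Z_def obs_gain_coeff_def Let_def eta_obs_def softmax_def exp_reward_def using Y(1) by measurable
  have Z_bound: "\<bar>Z a j \<omega>\<bar> \<le> 1 * (1 / (8 * Rmax\<^sup>2) * (1 + 2 / (8 * Rmax\<^sup>2)))" if "\<omega> \<in> space M" for a j \<omega>
    unfolding Z_def using Y(2)[OF that] Rmax_pos r_range by (intro abs_mult_le abs_obs_gain_coeff_le) auto
  have G: "G j \<in> borel_measurable borel" for j unfolding G_def by measurable
  have G_bound: "\<bar>G j x\<bar> \<le> (1 + Rmax)\<^sup>2" if "j < 3" for j x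
  proof -
    have "\<bar>G j x\<bar> \<le> (1 + Rmax) ^ j"
      unfolding G_def power_abs using abs_clip_le[of x] by (intro power_mono) auto
    also have "\<dots> \<le> (1 + Rmax)\<^sup>2" using that Rmax_pos by (intro power_increasing) auto
    finally show ?thesis .
  qed
  have Q: "Q = (\<lambda>\<omega>. \<Sum>j<3. Z (A t \<omega>) j \<omega> * G j (X t \<omega>))"
    and Q_R: "(\<lambda>x. \<Sum>j<3. Z a j \<omega> * G j x) = (\<lambda>x. Y \<omega> * obs_gain_bound Rmax (\<theta> t \<omega>) r a (clip x))" for a \<omega>
    unfolding Q_def Z_def G_def obs_gain_bound_expand by (simp_all add: sum_distrib_left mult.assoc)
  show "integrable M Q"
    unfolding Q using Z Z_bound G G_bound by (intro integral_poly_action_reward) auto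
  have "(\<integral>\<omega>. Q \<omega> \<partial>M) = (\<integral>\<omega>. (\<Sum>a\<in>UNIV. softmax (\<theta> t \<omega>) a
      * (Y \<omega> * (\<integral>x. obs_gain_bound Rmax (\<theta> t \<omega>) r a (clip x) \<partial>R a))) \<partial>M)"
    unfolding Q using Z Z_bound G G_bound by (subst integral_poly_action_reward) (auto simp: Q_R)
  also have "\<dots> \<ge> 0"
  proof (rule integral_nonneg_AE, rule AE_I2)
    fix \<omega> assume "\<omega> \<in> space M"
    then show "0 \<le> (\<Sum>a\<in>UNIV. softmax (\<theta> t \<omega>) a
        * (Y \<omega> * (\<integral>x. obs_gain_bound Rmax (\<theta> t \<omega>) r a (clip x) \<partial>R a)))"
      using Y(2) softmax_pos integral_R_obs_gain_bound_clip_nonneg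
      by (intro sum_nonneg mult_nonneg_nonneg) (auto intro: less_imp_le)
  qed
  finally show "0 \<le> (\<integral>\<omega>. Q \<omega> \<partial>M)" .
qed

lemma integral_mult_exp_reward_increment_nonneg:
  assumes Y: "Y \<in> borel_measurable (F t)" "\<And>\<omega>. \<omega> \<in> space M \<Longrightarrow> Y \<omega> \<in> {0..1}"
  shows "0 \<le> (\<integral>\<omega>. Y \<omega> * (exp_reward (softmax (\<theta> (Suc t) \<omega>)) r - exp_reward (softmax (\<theta> t \<omega>)) r) \<partial>M)"
proof -
  let ?Q = "\<lambda>\<omega>. Y \<omega> * obs_gain_bound Rmax (\<theta> t \<omega>) r (A t \<omega>) (clip (X t \<omega>))"
  have "0 \<le> (\<integral>\<omega>. ?Q \<omega> \<partial>M)" by (rule integral_mult_obs_gain_bound_nonneg(2)[OF Y])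
  also have "\<dots> \<le> (\<integral>\<omega>. Y \<omega> * (exp_reward (softmax (\<theta> (Suc t) \<omega>)) r - exp_reward (softmax (\<theta> t \<omega>)) r) \<partial>M)"
  proof (rule integral_mono_AE)
    show "integrable M ?Q" by (rule integral_mult_obs_gain_bound_nonneg(1)[OF Y])
    show "integrable M (\<lambda>\<omega>. Y \<omega> * (exp_reward (softmax (\<theta> (Suc t) \<omega>)) r - exp_reward (softmax (\<theta> t \<omega>)) r))"
    proof (rule integrable_bounded_mult[where B=1 and C=1])
      show "(\<lambda>\<omega>. exp_reward (softmax (\<theta> (Suc t) \<omega>)) r - exp_reward (softmax (\<theta> t \<omega>)) r) \<in> borel_measurable M"
        using measurable_F_imp_M[OF exp_reward_measurable_F] by measurable
      show "\<bar>exp_reward (softmax (\<theta> (Suc t) \<omega>)) r - exp_reward (softmax (\<theta> t \<omega>)) r\<bar> \<le> 1" for \<omega>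
        using exp_reward_range[of "\<theta> (Suc t) \<omega>"] exp_reward_range[of "\<theta> t \<omega>"] by auto
    qed (use measurable_F_imp_M[OF Y(1)] Y(2) in auto)
    show "AE \<omega> in M. ?Q \<omega> \<le> Y \<omega> * (exp_reward (softmax (\<theta> (Suc t) \<omega>)) r - exp_reward (softmax (\<theta> t \<omega>)) r)"
      using AE_X_in_support[of t] AE_space
    proof eventually_elim
      case (elim \<omega>)
      have "obs_gain_bound Rmax (\<theta> t \<omega>) r (A t \<omega>) (X t \<omega>)
          \<le> exp_reward (softmax (\<theta> (Suc t) \<omega>)) r - exp_reward (softmax (\<theta> t \<omega>)) r"
        unfolding update[OF elim(2)] using r_range elim(1)
        by (intro exp_reward_update_obs_ge[OF Rmax_pos _ r_le_Rmax]) auto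
      then show ?case
        unfolding clip_eq[OF elim(1)] using Y(2)[OF elim(2)] by (intro mult_left_mono) auto
    qed
  qed
  finally show ?thesis .
qed

theorem AE_convergent_exp_reward: "AE \<omega> in M. convergent (\<lambda>t. exp_reward (softmax (\<theta> t \<omega>)) r)"
proof -
  interpret submartingale_01 M F "\<lambda>t \<omega>. exp_reward (softmax (\<theta> t \<omega>)) r"
  proof
    show "(\<lambda>\<omega>. exp_reward (softmax (\<theta> t \<omega>)) r) \<in> borel_measurable (F t)" for t
      by (rule exp_reward_measurable_F)
    show "exp_reward (softmax (\<theta> t \<omega>)) r \<in> {0..1}" for t \<omega>
      by (rule exp_reward_range)
  qed (rule integral_mult_exp_reward_increment_nonneg)
  show ?thesis by (rule AE_convergent)
qed

end

theorem corollary1: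
  fixes M :: "'w measure" and F :: "nat \<Rightarrow> 'w measure"
    and A :: "nat \<Rightarrow> 'w \<Rightarrow> 'a::finite" and X :: "nat \<Rightarrow> 'w \<Rightarrow> real"
    and \<theta> :: "nat \<Rightarrow> 'w \<Rightarrow> 'a \<Rightarrow> real" and \<theta>0 :: "'a \<Rightarrow> real"
    and r :: "'a \<Rightarrow> real" and R :: "'a \<Rightarrow> real measure"
    and Rmax :: real and \<eta> :: real
  assumes "prob_space M"
    and "CARD('a) \<ge> 2"
    and "\<forall>a. r a \<in> {0..1}"
    and "Rmax > 0"
    and "\<forall>a. prob_space (R a)"
    and "\<forall>a. sets (R a) = sets borel"
    and "\<forall>a. AE x in R a. x \<in> {-Rmax..Rmax}"
    and "\<forall>a. (\<integral>x. x \<partial>R a) = r a"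
    and "\<forall>t. subalgebra M (F t)"
    and "\<forall>t. sets (F t) \<subseteq> sets (F (Suc t))"
    and "\<forall>t. A t \<in> measurable (F (Suc t)) (count_space UNIV)"
    and "\<forall>t. X t \<in> borel_measurable (F (Suc t))"
    and "\<forall>\<omega>\<in>space M. \<theta> 0 \<omega> = \<theta>0"
    and "\<forall>t a. AE \<omega> in M.
           real_cond_exp M (F t) (indicator {\<omega>\<in>space M. A t \<omega> = a}) \<omega>
             = softmax (\<theta> t \<omega>) a"
    and "(\<eta> > 0 \<and>
          (\<forall>t. \<forall>\<omega>\<in>space M. \<theta> (Suc t) \<omega> =
             (\<lambda>a. \<theta> t \<omega> a + \<eta> * (rhat_true (\<theta> t \<omega>) r (A t \<omega>) a
                                    - baseline (\<theta> t \<omega>) r (A t \<omega>) a))))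
       \<or> ((\<forall>t a (g::real \<Rightarrow> real). g \<in> borel_measurable borel \<longrightarrow> bounded (range g) \<longrightarrow>
             (AE \<omega> in M.
               real_cond_exp M (F t)
                 (\<lambda>\<omega>. indicator {\<omega>\<in>space M. A t \<omega> = a} \<omega> * g (X t \<omega>)) \<omega>
               = softmax (\<theta> t \<omega>) a * (\<integral>x. g x \<partial>R a)))
          \<and> (\<forall>t. \<forall>\<omega>\<in>space M. \<theta> (Suc t) \<omega> =
             (\<lambda>a. \<theta> t \<omega> a + eta_obs (\<theta> t \<omega>) r Rmax (A t \<omega>)
                      * (rhat_obs (\<theta> t \<omega>) (X t \<omega>) (A t \<omega>) a
                         - baseline (\<theta> t \<omega>) r (A t \<omega>) a))))"
  shows "AE \<omega> in M. convergent (\<lambda>t. exp_reward (softmax (\<theta> t \<omega>)) r)"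
  using assms(15)
proof (elim disjE conjE)
  \<comment> \<open>Neither \<open>CARD('a) \<ge> 2\<close> nor the sampling hypothesis on the action alone is needed:
    case (i) holds for every action sequence, and in case (ii) the latter is the instance
    \<open>g = 1\<close> of the joint sampling hypothesis.\<close>
  assume \<eta>: "0 < \<eta>" and update: "\<forall>t. \<forall>\<omega>\<in>space M. \<theta> (Suc t) \<omega> =
    (\<lambda>a. \<theta> t \<omega> a + \<eta> * (rhat_true (\<theta> t \<omega>) r (A t \<omega>) a - baseline (\<theta> t \<omega>) r (A t \<omega>) a))"
  show ?thesis
  proof (rule AE_I2)
    fix \<omega> assume "\<omega> \<in> space M"
    then show "convergent (\<lambda>t. exp_reward (softmax (\<theta> t \<omega>)) r)"
      using assms(3) update
      by (intro convergent_exp_reward_update_true[where a="\<lambda>t. A t \<omega>" and hi=1, OF \<eta>]) auto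
  qed
next
  assume sampling: "\<forall>t a (g::real \<Rightarrow> real). g \<in> borel_measurable borel \<longrightarrow> bounded (range g) \<longrightarrow>
      (AE \<omega> in M. real_cond_exp M (F t) (\<lambda>\<omega>. indicator {\<omega>\<in>space M. A t \<omega> = a} \<omega> * g (X t \<omega>)) \<omega>
         = softmax (\<theta> t \<omega>) a * (\<integral>x. g x \<partial>R a))"
    and update: "\<forall>t. \<forall>\<omega>\<in>space M. \<theta> (Suc t) \<omega> =
      (\<lambda>a. \<theta> t \<omega> a + eta_obs (\<theta> t \<omega>) r Rmax (A t \<omega>)
             * (rhat_obs (\<theta> t \<omega>) (X t \<omega>) (A t \<omega>) a - baseline (\<theta> t \<omega>) r (A t \<omega>) a))"
  have filtered: "filtered_prob_space M F"
    unfolding filtered_prob_space_def filtered_prob_space_axioms_def using assms(1,9,10) by blast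
  then interpret filtered_prob_space M F .
  have "(\<lambda>\<omega>. \<theta> 0 \<omega> a) \<in> borel_measurable (F 0)" for a
    by (rule measurable_cong[THEN iffD2, of _ _ "\<lambda>_. \<theta>0 a"]) (simp_all add: space_F assms(13))
  then interpret observed_reward_pg M F A X \<theta> r R Rmax
    unfolding observed_reward_pg_def observed_reward_pg_axioms_def
    using filtered assms(3-8,11,12) sampling update by blast
  show ?thesis by (rule AE_convergent_exp_reward)
qed

end
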